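(* Let $m\ge2$, $w$ an infinite periodic or Sturmian word over $\{0,1\}$ with slope $\alpha$, $\beta=\frac1{m+\alpha}$, and $A=A(m,w)$ with the $\mathbb{Z}_2$-grading in which $z_1^{(1)},a$ are even and $b$ is odd. For every $0<\varepsilon\le\frac12-\beta$ there exists $n_0$ such that $c_n^{gr}(A)\le 2n^3\Phi(\beta+\varepsilon)^n$ for all $n\ge n_0$. In particular $\overline{\exp}^{gr}(A)\le\Phi(\beta)$.
   Context: $F$ is a field of characteristic zero. $A(m,w)$: basis $\{a,b,z_j^{(i)}: i\ge1,1\le j\le m+w_i\}$, products $z_j^{(i)}a=z_{j+1}^{(i)}$ for $j<m+w_i$, $z_{m+w_i}^{(i)}b=z_1^{(i+1)}$, all other products zero. Grading: $A_0=\mathrm{span}\{a,z_j^{(i)}:i\text{ odd}\}$, $A_1=\mathrm{span}\{b,z_j^{(i)}:i\text{ even}\}$. Slope $\pi(w)=\lim_n(w_1+\dots+w_n)/n$. $\Phi(x)=x^{-x}(1-x)^{-(1-x)}$. $c_n^{gr}(A)=\sum_{k=0}^n\binom nk c_{k,n-k}(A)$, with $c_{k,n-k}(A)$ the dimension of the space of polynomials multilinear in even $x_1..x_k$ and odd $y_1..y_{n-k}$ modulo graded identities of $A$; $\overline{\exp}^{gr}(A)=\limsup\sqrt[n]{c_n^{gr}(A)}$. *)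

theory Defs
  imports "HOL-Analysis.Analysis"
begin

text \<open>An infinite word w = w_1 w_2 ... over {0,1} is modelled as a function
  w :: nat \<Rightarrow> nat with w i \<in> {0,1} for i \<ge> 1 (the value at 0 is irrelevant).\<close>

definition binary_word :: "(nat \<Rightarrow> nat) \<Rightarrow> bool" where
  "binary_word w \<longleftrightarrow> (\<forall>i\<ge>1. w i \<in> {0,1})"

definition periodic_word :: "(nat \<Rightarrow> nat) \<Rightarrow> bool" where
  "periodic_word w \<longleftrightarrow> (\<exists>p\<ge>1. \<forall>i\<ge>1. w (i + p) = w i)"

definition factors :: "(nat \<Rightarrow> nat) \<Rightarrow> nat \<Rightarrow> nat list set" where
  "factors w n = {map (\<lambda>j. w (i + j)) [0..<n] | i. i \<ge> 1}"

definition sturmian_word :: "(nat \<Rightarrow> nat) \<Rightarrow> bool" where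
  "sturmian_word w \<longleftrightarrow> (\<forall>n. finite (factors w n) \<and> card (factors w n) = n + 1)"

definition has_slope :: "(nat \<Rightarrow> nat) \<Rightarrow> real \<Rightarrow> bool" where
  "has_slope w \<alpha> \<longleftrightarrow> (\<lambda>n. (\<Sum>i=1..n. real (w i)) / real n) \<longlonglongrightarrow> \<alpha>"

datatype bidx = Ba | Bb | Bz nat nat   (* Bz i j = z_j^(i) *)

definition valid_idx :: "nat \<Rightarrow> (nat \<Rightarrow> nat) \<Rightarrow> bidx \<Rightarrow> bool" where
  "valid_idx m w b = (case b of Ba \<Rightarrow> True | Bb \<Rightarrow> True
      | Bz i j \<Rightarrow> 1 \<le> i \<and> 1 \<le> j \<and> j \<le> m + w i)"

text \<open>Product of basis elements: Some e if the product is the basis element e, None if zero.\<close>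
fun bprod :: "nat \<Rightarrow> (nat \<Rightarrow> nat) \<Rightarrow> bidx \<Rightarrow> bidx \<Rightarrow> bidx option" where
  "bprod m w (Bz i j) Ba = (if j < m + w i then Some (Bz i (j + 1)) else None)"
| "bprod m w (Bz i j) Bb = (if j = m + w i then Some (Bz (i + 1) 1) else None)"
| "bprod m w _ _ = None"

fun even_idx :: "bidx \<Rightarrow> bool" where
  "even_idx Ba = True"
| "even_idx Bb = False"
| "even_idx (Bz i j) = odd i"

definition A_elem :: "nat \<Rightarrow> (nat \<Rightarrow> nat) \<Rightarrow> (bidx \<Rightarrow> 'a::field) \<Rightarrow> bool" where
  "A_elem m w u \<longleftrightarrow> finite {b. u b \<noteq> 0} \<and> (\<forall>b. u b \<noteq> 0 \<longrightarrow> valid_idx m w b)"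

definition A_even :: "nat \<Rightarrow> (nat \<Rightarrow> nat) \<Rightarrow> (bidx \<Rightarrow> 'a::field) \<Rightarrow> bool" where
  "A_even m w u \<longleftrightarrow> A_elem m w u \<and> (\<forall>b. u b \<noteq> 0 \<longrightarrow> even_idx b)"

definition A_odd :: "nat \<Rightarrow> (nat \<Rightarrow> nat) \<Rightarrow> (bidx \<Rightarrow> 'a::field) \<Rightarrow> bool" where
  "A_odd m w u \<longleftrightarrow> A_elem m w u \<and> (\<forall>b. u b \<noteq> 0 \<longrightarrow> \<not> even_idx b)"

definition A_mult :: "nat \<Rightarrow> (nat \<Rightarrow> nat) \<Rightarrow> (bidx \<Rightarrow> 'a::field) \<Rightarrow> (bidx \<Rightarrow> 'a) \<Rightarrow> bidx \<Rightarrow> 'a" where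
  "A_mult m w u v e = (\<Sum>b1\<in>{b. u b \<noteq> 0}. \<Sum>b2\<in>{b. v b \<noteq> 0}.
      (if bprod m w b1 b2 = Some e then u b1 * v b2 else 0))"

text \<open>In degree n the
  variables are 0..n-1; for the space P_{k,n-k}, variables v < k stand for the even
  variables x_1..x_k and variables k \<le> v < n for the odd variables y_1..y_{n-k}.\<close>
datatype mon = Var nat | Mul mon mon

fun leaves :: "mon \<Rightarrow> nat list" where
  "leaves (Var v) = [v]"
| "leaves (Mul s t) = leaves s @ leaves t"

definition multilin_mons :: "nat \<Rightarrow> mon set" where
  "multilin_mons n = {t. distinct (leaves t) \<and> set (leaves t) = {..<n}}"

definition multilin_polys :: "nat \<Rightarrow> (mon \<Rightarrow> 'a::field) set" where
  "multilin_polys n = {p. \<forall>t. p t \<noteq> 0 \<longrightarrow> t \<in> multilin_mons n}"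

fun eval_mon :: "nat \<Rightarrow> (nat \<Rightarrow> nat) \<Rightarrow> mon \<Rightarrow> (nat \<Rightarrow> bidx \<Rightarrow> 'a::field) \<Rightarrow> bidx \<Rightarrow> 'a" where
  "eval_mon m w (Var v) s = s v"
| "eval_mon m w (Mul t1 t2) s = A_mult m w (eval_mon m w t1 s) (eval_mon m w t2 s)"

definition eval_poly :: "nat \<Rightarrow> (nat \<Rightarrow> nat) \<Rightarrow> nat \<Rightarrow> (mon \<Rightarrow> 'a::field) \<Rightarrow> (nat \<Rightarrow> bidx \<Rightarrow> 'a) \<Rightarrow> bidx \<Rightarrow> 'a" where
  "eval_poly m w n p s e = (\<Sum>t\<in>multilin_mons n. p t * eval_mon m w t s e)"

definition graded_subst :: "nat \<Rightarrow> (nat \<Rightarrow> nat) \<Rightarrow> nat \<Rightarrow> nat \<Rightarrow> (nat \<Rightarrow> bidx \<Rightarrow> 'a::field) \<Rightarrow> bool" where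
  "graded_subst m w k n s \<longleftrightarrow> (\<forall>v<n. (v < k \<longrightarrow> A_even m w (s v)) \<and> (k \<le> v \<longrightarrow> A_odd m w (s v)))"

definition graded_identity :: "nat \<Rightarrow> (nat \<Rightarrow> nat) \<Rightarrow> nat \<Rightarrow> nat \<Rightarrow> (mon \<Rightarrow> 'a::field) \<Rightarrow> bool" where
  "graded_identity m w k n p \<longleftrightarrow>
     (\<forall>s. graded_subst m w k n s \<longrightarrow> (\<forall>e. eval_poly m w n p s e = 0))"

text \<open>c_{k,n-k}(A) = dim P_{k,n-k} / (P_{k,n-k} \<inter> Id^gr(A)), i.e. the maximal number of
  elements of P_{k,n-k} that are linearly independent modulo the graded identities.\<close>
definition cgr_kl :: "'a::field itself \<Rightarrow> nat \<Rightarrow> (nat \<Rightarrow> nat) \<Rightarrow> nat \<Rightarrow> nat \<Rightarrow> nat" where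
  "cgr_kl (F :: 'a itself) m w k n = Max {r. \<exists>f :: nat \<Rightarrow> mon \<Rightarrow> 'a.
      (\<forall>i<r. f i \<in> multilin_polys n) \<and>
      (\<forall>c :: nat \<Rightarrow> 'a. graded_identity m w k n (\<lambda>t. \<Sum>i<r. c i * f i t) \<longrightarrow> (\<forall>i<r. c i = 0))}"

definition cgr :: "'a::field itself \<Rightarrow> nat \<Rightarrow> (nat \<Rightarrow> nat) \<Rightarrow> nat \<Rightarrow> nat" where
  "cgr F m w n = (\<Sum>k=0..n. (n choose k) * cgr_kl F m w k n)"

definition Phi :: "real \<Rightarrow> real" where
  "Phi x = x powr (- x) * (1 - x) powr (- (1 - x))"

end

theory Submission
  imports Defs "HOL-Library.Function_Algebras"
begin

text \<open>In \<open>A(m,w)\<close> the only nonzero products are \<open>z a\<close> and \<open>z b\<close>, so a multilinear monomial vanishes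
  unless it is left normed, and under a graded substitution its value is a scalar times the first
  substituted element multiplied by a word in \<open>a, b\<close> that records the parities of the remaining
  variables. Hence \<open>c_{k,n-k}(A)\<close> is at most the number of pairs (first variable, word) whose word is
  nonzero on some \<open>z_j^(i)\<close>. Such a word of length \<open>n - 1\<close> is forced by \<open>j\<close> and the factor of \<open>w\<close>
  at \<open>i\<close>, so there are \<open>O(n^2)\<close> of them, \<open>w\<close> having linear factor complexity. A word with \<open>q\<close>
  letters \<open>b\<close> runs through \<open>q - 1\<close> whole blocks \<open>z^(i)\<close> of lengths \<open>m + w_i\<close>; since periodic and
  Sturmian (hence balanced) words have uniformly distributed ones, \<open>(q - 1)(m + \<alpha> - \<delta>) \<le> n\<close> for
  large \<open>q\<close>. So only binomial coefficients \<open>n choose k\<close> with \<open>n - k \<le> (\<beta> + \<epsilon>) n\<close> occur, and these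
  are at most \<open>\<Phi>(\<beta> + \<epsilon>)^n\<close>.\<close>

section \<open>Factors of binary words\<close>

definition factor_at :: "(nat \<Rightarrow> nat) \<Rightarrow> nat \<Rightarrow> nat \<Rightarrow> nat list" where
  "factor_at w i k = map (\<lambda>j. w (i + j)) [0..<k]"

lemma factors_eq_image: "factors w k = (\<lambda>i. factor_at w i k) ` {1..}"
  unfolding factors_def factor_at_def by auto

lemma factor_at_in_factors: "i \<ge> 1 \<Longrightarrow> factor_at w i k \<in> factors w k"
  unfolding factors_eq_image by auto

lemma length_factor_at[simp]: "length (factor_at w i k) = k"
  by (simp add: factor_at_def)

lemma factor_at_Suc_snoc: "factor_at w i (Suc k) = factor_at w i k @ [w (i + k)]"
  by (simp add: factor_at_def)

lemma factor_at_Suc_Cons: "factor_at w i (Suc k) = w i # factor_at w (Suc i) k"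
  unfolding factor_at_def by (induct k) auto

lemma nth_factor_at: "j < k \<Longrightarrow> factor_at w i k ! j = w (i + j)"
  by (simp add: factor_at_def)

lemma factor_at_eq_iff: "factor_at w i k = factor_at w i' k \<longleftrightarrow> (\<forall>j<k. w (i + j) = w (i' + j))"
  by (auto simp: factor_at_def)

lemma factor_at_Suc_shift: "factor_at w (Suc i) k = tl (factor_at w i k) @ (if k = 0 then [] else [w (i + k)])"
  unfolding factor_at_def by (induct k) (auto simp: upt_conv_Cons map_Suc_upt[symmetric] o_def)

lemma factors_subset_binary_lists:
  assumes "binary_word w"
  shows "factors w k \<subseteq> {xs. set xs \<subseteq> {0,1} \<and> length xs = k}"
proof
  fix xs assume "xs \<in> factors w k"
  then obtain i where i: "i \<ge> 1" "xs = factor_at w i k" unfolding factors_eq_image by auto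
  have "\<forall>j. w (i + j) \<in> {0,1}" using assms i unfolding binary_word_def by auto
  then show "xs \<in> {xs. set xs \<subseteq> {0,1} \<and> length xs = k}" using i unfolding factor_at_def
    by (simp only: mem_Collect_eq set_map length_map length_upt diff_zero image_subset_iff) blast
qed

lemma length_factors: "u \<in> factors w k \<Longrightarrow> length u = k"
  unfolding factors_eq_image by auto

lemma finite_factors:
  assumes "binary_word w"
  shows "finite (factors w k)"
proof -
  have "finite {xs. set xs \<subseteq> {0::nat,1} \<and> length xs = k}"
    by (rule finite_lists_length_eq) simp
  then show ?thesis using factors_subset_binary_lists[OF assms] finite_subset by blast
qed

lemma factors_0: "factors w 0 = {[]}"
  unfolding factors_eq_image factor_at_def by auto

definition right_special :: "(nat \<Rightarrow> nat) \<Rightarrow> nat list \<Rightarrow> bool" where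
  "right_special w u \<longleftrightarrow> u @ [0] \<in> factors w (Suc (length u)) \<and> u @ [1] \<in> factors w (Suc (length u))"

lemma factors_snocD:
  assumes "u @ [c] \<in> factors w (Suc k)"
  shows "u \<in> factors w k"
proof -
  from assms obtain i where i: "i \<ge> 1" "factor_at w i (Suc k) = u @ [c]"
    unfolding factors_eq_image by auto
  then have "factor_at w i k = u" by (simp add: factor_at_Suc_snoc)
  then show ?thesis using i factor_at_in_factors by blast
qed

lemma factors_SucE:
  assumes "binary_word w" "v \<in> factors w (Suc k)"
  obtains u c where "v = u @ [c]" "u \<in> factors w k" "c = 0 \<or> c = 1"
proof -
  obtain i where i: "i \<ge> 1" "v = factor_at w i (Suc k)" using assms(2) unfolding factors_eq_image by auto
  then have "w (i + k) = 0 \<or> w (i + k) = 1" using assms(1) unfolding binary_word_def by auto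
  then show ?thesis using that i factor_at_Suc_snoc factor_at_in_factors by metis
qed

lemma factors_extend:
  assumes "binary_word w" "u \<in> factors w k"
  shows "u @ [0] \<in> factors w (Suc k) \<or> u @ [1] \<in> factors w (Suc k)"
proof -
  obtain i where i: "i \<ge> 1" "u = factor_at w i k" using assms(2) unfolding factors_eq_image by auto
  then have "w (i + k) = 0 \<or> w (i + k) = 1" using assms(1) unfolding binary_word_def by auto
  then show ?thesis using i factor_at_Suc_snoc factor_at_in_factors by metis
qed

lemma card_factors_Suc:
  assumes bin: "binary_word w"
  shows "card (factors w (Suc k)) = card (factors w k) + card {u \<in> factors w k. right_special w u}"
proof -
  define A where "A = {u \<in> factors w k. u @ [0] \<in> factors w (Suc k)}"
  define B where "B = {u \<in> factors w k. u @ [1] \<in> factors w (Suc k)}"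
  have fin: "finite A" "finite B" unfolding A_def B_def using finite_factors[OF bin] by auto
  have "factors w (Suc k) = (\<lambda>u. u @ [0]) ` A \<union> (\<lambda>u. u @ [1]) ` B"
  proof
    show "factors w (Suc k) \<subseteq> (\<lambda>u. u @ [0]) ` A \<union> (\<lambda>u. u @ [1]) ` B"
      using factors_SucE[OF bin] unfolding A_def B_def by (smt (verit) Un_iff image_eqI mem_Collect_eq subsetI)
    show "(\<lambda>u. u @ [0]) ` A \<union> (\<lambda>u. u @ [1]) ` B \<subseteq> factors w (Suc k)" unfolding A_def B_def by auto
  qed
  then have "card (factors w (Suc k)) = card ((\<lambda>u. u @ [0]) ` A) + card ((\<lambda>u. u @ [1]) ` B)"
    by (simp only:) (rule card_Un_disjoint, use fin in auto)
  also have "\<dots> = card A + card B" by (simp add: card_image inj_on_def)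
  also have "\<dots> = card (A \<union> B) + card (A \<inter> B)" using card_Un_Int[OF fin] by simp
  also have "A \<union> B = factors w k" unfolding A_def B_def using factors_extend[OF bin] by auto
  also have "A \<inter> B = {u \<in> factors w k. right_special w u}"
    unfolding A_def B_def right_special_def using length_factors by auto
  finally show ?thesis .
qed

lemma card_factors_le_Suc:
  assumes "binary_word w"
  shows "card (factors w k) \<le> card (factors w (Suc k))"
  using card_factors_Suc[OF assms] by simp

definition eventually_periodic :: "(nat \<Rightarrow> nat) \<Rightarrow> bool" where
  "eventually_periodic w \<longleftrightarrow> (\<exists>T P. T \<ge> 1 \<and> P \<ge> 1 \<and> (\<forall>t\<ge>T. w (t + P) = w t))"

lemma factors_eventually_periodic_subset:
  assumes "T \<ge> 1" "P \<ge> 1" "\<forall>t\<ge>T. w (t + P) = w t"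
  shows "factors w k \<subseteq> (\<lambda>i. factor_at w i k) ` {1..<T+P}"
proof
  fix u assume "u \<in> factors w k"
  then obtain i where i: "i \<ge> 1" "u = factor_at w i k" unfolding factors_eq_image by auto
  show "u \<in> (\<lambda>i. factor_at w i k) ` {1..<T+P}"
  proof (cases "i < T + P")
    case True then show ?thesis using i by auto
  next
    case False
    define i' where "i' = T + (i - T) mod P"
    have per: "\<And>q r. w (T + r + q * P) = w (T + r)"
    proof -
      fix q r show "w (T + r + q * P) = w (T + r)"
      proof (induct q)
        case (Suc q)
        have "w (T + r + Suc q * P) = w ((T + r + q * P) + P)" by (simp add: algebra_simps)
        also have "\<dots> = w (T + r + q * P)" using assms(3) by simp
        finally show ?case using Suc by simp
      qed simp
    qed
    have "i = T + (i - T) mod P + ((i - T) div P) * P" using False by simp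
    then have "\<forall>j. w (i + j) = w (i' + j)"
      unfolding i'_def by (metis per add.commute add.left_commute)
    then have "u = factor_at w i' k" unfolding i factor_at_def by simp
    moreover have "i' \<in> {1..<T+P}" unfolding i'_def using assms by auto
    ultimately show ?thesis by auto
  qed
qed

lemma eventually_periodic_bounded_complexity:
  assumes "eventually_periodic w"
  shows "\<exists>C. \<forall>k. card (factors w k) \<le> C"
proof -
  from assms obtain T P where TP: "T \<ge> 1" "P \<ge> 1" "\<forall>t\<ge>T. w (t + P) = w t"
    unfolding eventually_periodic_def by auto
  have "card (factors w k) \<le> T + P" for k
  proof -
    have "card (factors w k) \<le> card ((\<lambda>i. factor_at w i k) ` {1..<T+P})"
      by (rule card_mono) (use factors_eventually_periodic_subset[OF TP] in auto)
    also have "\<dots> \<le> card {1..<T+P}" by (rule card_image_le) simp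
    finally show ?thesis by simp
  qed
  then show ?thesis by blast
qed

lemma sturmian_not_eventually_periodic:
  assumes "sturmian_word w"
  shows "\<not> eventually_periodic w"
proof
  assume "eventually_periodic w"
  then obtain C where "\<forall>k. card (factors w k) \<le> C" using eventually_periodic_bounded_complexity by blast
  then have "card (factors w C) \<le> C" by blast
  moreover have "card (factors w C) = C + 1" using assms unfolding sturmian_word_def by blast
  ultimately show False by simp
qed

lemma eventually_periodic_if_extension_determined:
  assumes bin: "binary_word w" and i1: "i \<ge> 1"
    and determined: "\<forall>t t'. t \<ge> i \<longrightarrow> t' \<ge> i \<longrightarrow> factor_at w t j = factor_at w t' j \<longrightarrow> w (t + j) = w (t' + j)"
  shows "eventually_periodic w"
proof -
  define N where "N = card (factors w j)"
  have "\<not> inj_on (\<lambda>t. factor_at w t j) {i..i+N}"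
  proof
    assume inj: "inj_on (\<lambda>t. factor_at w t j) {i..i+N}"
    have "card {i..i+N} \<le> card (factors w j)"
      by (rule card_inj_on_le[OF inj]) (use i1 factor_at_in_factors finite_factors[OF bin] in auto)
    then show False unfolding N_def by simp
  qed
  then obtain t1 t2 where t12: "t1 \<in> {i..i+N}" "t2 \<in> {i..i+N}" "t1 < t2" "factor_at w t1 j = factor_at w t2 j"
    unfolding inj_on_def by (metis linorder_neqE_nat)
  have shifted_eq: "factor_at w (t1 + s) j = factor_at w (t2 + s) j" for s
  proof (induct s)
    case 0 then show ?case using t12 by simp
  next
    case (Suc s)
    have "w (t1 + s + j) = w (t2 + s + j)" using determined Suc t12 by auto
    then show ?case using Suc factor_at_Suc_shift[of w "t1 + s" j] factor_at_Suc_shift[of w "t2 + s" j] by simp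
  qed
  have "\<forall>t\<ge>t1 + j. w (t + (t2 - t1)) = w t"
  proof (intro allI impI)
    fix t assume "t \<ge> t1 + j"
    then obtain s where s: "t = t1 + s + j" by (metis add.commute le_add_diff_inverse add.assoc)
    have "w (t1 + s + j) = w (t2 + s + j)" using determined shifted_eq t12 by auto
    then show "w (t + (t2 - t1)) = w t" using s t12 by (simp add: ac_simps)
  qed
  then show ?thesis unfolding eventually_periodic_def using t12 i1
    by (intro exI[of _ "t1 + j"] exI[of _ "t2 - t1"]) auto
qed

lemma eventually_periodic_if_no_right_special:
  assumes bin: "binary_word w" and "\<forall>u\<in>factors w j. \<not> right_special w u"
  shows "eventually_periodic w"
proof (rule eventually_periodic_if_extension_determined[OF bin, of 1 j])
  show "\<forall>t t'. t \<ge> 1 \<longrightarrow> t' \<ge> 1 \<longrightarrow> factor_at w t j = factor_at w t' j \<longrightarrow> w (t + j) = w (t' + j)"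
  proof (intro allI impI)
    fix t t' assume tt: "t \<ge> 1" "t' \<ge> 1" "factor_at w t j = factor_at w t' j"
    show "w (t + j) = w (t' + j)"
    proof (rule ccontr)
      assume ne: "w (t + j) \<noteq> w (t' + j)"
      have b: "w (t+j) \<in> {0,1}" "w (t'+j) \<in> {0,1}" using bin tt unfolding binary_word_def by auto
      have f1: "factor_at w t j @ [w (t+j)] \<in> factors w (Suc j)" using factor_at_in_factors tt factor_at_Suc_snoc by metis
      have f2: "factor_at w t j @ [w (t'+j)] \<in> factors w (Suc j)" using factor_at_in_factors tt factor_at_Suc_snoc by metis
      have "right_special w (factor_at w t j)" unfolding right_special_def using f1 f2 b ne by auto
      then show False using assms(2) factor_at_in_factors tt by blast
    qed
  qed
qed simp

lemma morse_hedlund: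
  assumes bin: "binary_word w" and le: "card (factors w n) \<le> n"
  shows "eventually_periodic w"
proof -
  have "\<exists>j<n. card (factors w (Suc j)) = card (factors w j)"
  proof (rule ccontr)
    assume "\<not> ?thesis"
    then have "\<forall>j<n. card (factors w j) < card (factors w (Suc j))"
      using card_factors_le_Suc[OF bin] le_neq_implies_less by metis
    then have "card (factors w j) \<ge> j + 1" if "j \<le> n" for j
      using that by (induction j) (auto simp: factors_0 Suc_le_eq)
    from this[of n] show False using le by simp
  qed
  then obtain j where "card (factors w (Suc j)) = card (factors w j)" by blast
  then have "card {u \<in> factors w j. right_special w u} = 0" using card_factors_Suc[OF bin, of j] by simp
  then have "\<forall>u\<in>factors w j. \<not> right_special w u" using finite_factors[OF bin, of j] by auto
  then show ?thesis using eventually_periodic_if_no_right_special[OF bin] by blast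
qed

lemma sturmian_card_factors: "sturmian_word w \<Longrightarrow> card (factors w k) = k + 1"
  unfolding sturmian_word_def by blast

lemma sturmian_card_right_special:
  assumes "binary_word w" "sturmian_word w"
  shows "card {u \<in> factors w k. right_special w u} = 1"
proof -
  have "card (factors w (Suc k)) = card (factors w k) + card {u \<in> factors w k. right_special w u}"
    by (rule card_factors_Suc[OF assms(1)])
  moreover have "card (factors w (Suc k)) = Suc k + 1" "card (factors w k) = k + 1"
    using sturmian_card_factors[OF assms(2)] by blast+
  ultimately show ?thesis by linarith
qed

lemma sturmian_right_special_unique:
  assumes "binary_word w" "sturmian_word w" "u \<in> factors w k" "right_special w u" "v \<in> factors w k" "right_special w v"
  shows "u = v"
proof -
  have "card {u \<in> factors w k. right_special w u} = 1" by (rule sturmian_card_right_special[OF assms(1,2)])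
  then obtain z where z: "{u \<in> factors w k. right_special w u} = {z}" using card_1_singletonE by blast
  have "u \<in> {z}" "v \<in> {z}" using assms(3-6) unfolding z[symmetric] by auto
  then show ?thesis by simp
qed

lemma sturmian_right_special_unbounded:
  assumes bin: "binary_word w" and st: "sturmian_word w" and i1: "i \<ge> 1"
  shows "\<exists>t\<ge>i. right_special w (factor_at w t j)"
proof (rule ccontr)
  assume H: "\<not> ?thesis"
  have "eventually_periodic w"
  proof (rule eventually_periodic_if_extension_determined[OF bin i1, of j], intro allI impI)
    fix t t' assume tt: "t \<ge> i" "t' \<ge> i" "factor_at w t j = factor_at w t' j"
    show "w (t + j) = w (t' + j)"
    proof (rule ccontr)
      assume ne: "w (t + j) \<noteq> w (t' + j)"
      have b: "w (t+j) \<in> {0,1}" "w (t'+j) \<in> {0,1}" using bin tt i1 unfolding binary_word_def by auto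
      have t1: "t \<ge> 1" "t' \<ge> 1" using tt i1 by auto
      have f1: "factor_at w t j @ [w (t+j)] \<in> factors w (Suc j)" using factor_at_in_factors[OF t1(1), of w "Suc j"] factor_at_Suc_snoc by metis
      have f2: "factor_at w t j @ [w (t'+j)] \<in> factors w (Suc j)" using factor_at_in_factors[OF t1(2), of w "Suc j"] factor_at_Suc_snoc tt(3) by metis
      have "right_special w (factor_at w t j)" unfolding right_special_def using f1 f2 b ne by auto
      then show False using H tt by blast
    qed
  qed
  then show False using sturmian_not_eventually_periodic[OF st] by blast
qed

lemma binary_word_shift: "binary_word w \<Longrightarrow> binary_word (\<lambda>t. w (t + T))"
  unfolding binary_word_def by auto

lemma eventually_periodic_shiftD:
  assumes "eventually_periodic (\<lambda>t. w (t + T))"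
  shows "eventually_periodic w"
proof -
  obtain T' P where TP: "T' \<ge> 1" "P \<ge> 1" "\<forall>t\<ge>T'. w (t + P + T) = w (t + T)"
    using assms unfolding eventually_periodic_def by blast
  have "w (t + P) = w t" if "t \<ge> T' + T" for t
    using TP(3)[rule_format, of "t - T"] that by (simp add: algebra_simps)
  then show ?thesis unfolding eventually_periodic_def using TP by (intro exI[of _ "T' + T"] exI[of _ P]) auto
qed

text \<open>If the factor at \<open>i0\<close> never recurred after \<open>T\<close>, the suffix from \<open>T\<close> would miss the prefix of
  length \<open>i0 + k\<close>, so by Morse--Hedlund it, and hence \<open>w\<close>, would be eventually periodic.\<close>

lemma sturmian_factor_recurrent:
  assumes bin: "binary_word w" and st: "sturmian_word w" and i0: "i0 \<ge> 1"
  shows "\<exists>t\<ge>T. factor_at w t k = factor_at w i0 k"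
proof (rule ccontr)
  assume H: "\<not> ?thesis"
  define y where "y = (\<lambda>t. w (t + T))"
  define K where "K = i0 + k"
  have sub: "factors y K \<subseteq> factors w K - {factor_at w 1 K}"
  proof
    fix u assume "u \<in> factors y K"
    then obtain t where t: "t \<ge> 1" "u = factor_at y t K" unfolding factors_eq_image by auto
    have u': "u = factor_at w (t + T) K" unfolding t y_def factor_at_def by (simp add: ac_simps)
    have "u \<noteq> factor_at w 1 K"
    proof
      assume "u = factor_at w 1 K"
      then have eq: "\<forall>j<K. w (1 + j) = w (t + T + j)" using u' factor_at_eq_iff by metis
      have "factor_at w (t + T + (i0 - 1)) k = factor_at w i0 k"
        unfolding factor_at_eq_iff
      proof (intro allI impI)
        fix j assume "j < k"
        then have "i0 - 1 + j < K" using i0 unfolding K_def by simp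
        then have "w (1 + (i0 - 1 + j)) = w (t + T + (i0 - 1 + j))" using eq by blast
        moreover have "1 + (i0 - 1 + j) = i0 + j" using i0 by simp
        ultimately show "w (t + T + (i0 - 1) + j) = w (i0 + j)" by (simp add: ac_simps)
      qed
      moreover have "t + T + (i0 - 1) \<ge> T" by simp
      ultimately show False using H by blast
    qed
    then show "u \<in> factors w K - {factor_at w 1 K}" using u' factor_at_in_factors t by auto
  qed
  have "card (factors y K) \<le> card (factors w K - {factor_at w 1 K})"
    by (rule card_mono) (use sub finite_factors[OF bin] in auto)
  also have "\<dots> = K" using sturmian_card_factors[OF st, of K] factor_at_in_factors[of 1 w K] finite_factors[OF bin] by simp
  finally have "eventually_periodic y" using morse_hedlund[OF binary_word_shift[OF bin]] unfolding y_def by blast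
  then have "eventually_periodic w" unfolding y_def by (rule eventually_periodic_shiftD)
  then show False using sturmian_not_eventually_periodic[OF st] by blast
qed

section \<open>Sturmian words are balanced\<close>

definition weight :: "(nat \<Rightarrow> nat) \<Rightarrow> nat \<Rightarrow> nat \<Rightarrow> nat" where
  "weight w i k = (\<Sum>j<k. w (i + j))"

lemma weight_0 [simp]: "weight w i 0 = 0" by (simp add: weight_def)

lemma weight_Suc_right: "weight w i (Suc k) = weight w i k + w (i + k)"
  by (simp add: weight_def)

lemma weight_add: "weight w i (a + b) = weight w i a + weight w (i + a) b"
  by (induct b) (simp_all add: weight_Suc_right ac_simps)

lemma weight_Suc_left: "weight w i (Suc k) = w i + weight w (Suc i) k"
  using weight_add[of w i 1 k] by (simp add: weight_def)

lemma weight_cong: "(\<forall>j<k. w (i + j) = w (i' + j)) \<Longrightarrow> weight w i k = weight w i' k"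
  unfolding weight_def by simp

lemma weight_le: "binary_word w \<Longrightarrow> i \<ge> 1 \<Longrightarrow> weight w i k \<le> k"
proof (induct k)
  case (Suc k)
  have "i + k \<ge> 1" using Suc.prems by simp
  then have "w (i + k) \<in> {0,1}" using Suc.prems unfolding binary_word_def by blast
  then have "w (i + k) \<le> 1" by auto
  then show ?case using Suc by (simp add: weight_Suc_right)
qed simp

definition balanced :: "(nat \<Rightarrow> nat) \<Rightarrow> bool" where
  "balanced w \<longleftrightarrow> (\<forall>k i i'. i \<ge> 1 \<longrightarrow> i' \<ge> 1 \<longrightarrow> weight w i k \<le> weight w i' k + 1)"

lemma binary_wordD: "binary_word w \<Longrightarrow> i \<ge> 1 \<Longrightarrow> w i = 0 \<or> w i = 1"
  unfolding binary_word_def by auto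

lemma shortest_unbalanced:
  assumes "\<not> balanced w"
  obtains i i' k where "i \<ge> 1" "i' \<ge> 1" "weight w i' k + 1 < weight w i k"
    and "\<And>k' j j'. k' < k \<Longrightarrow> j \<ge> 1 \<Longrightarrow> j' \<ge> 1 \<Longrightarrow> weight w j k' \<le> weight w j' k' + 1"
proof -
  define P where "P k \<longleftrightarrow> (\<exists>i i'. i \<ge> 1 \<and> i' \<ge> 1 \<and> weight w i' k + 1 < weight w i k)" for k
  define k where "k = (LEAST k. P k)"
  have "\<exists>k. P k" using assms unfolding balanced_def P_def by (auto simp: not_le)
  then have "P k" unfolding k_def by (rule LeastI_ex)
  then obtain i i' where "i \<ge> 1" "i' \<ge> 1" "weight w i' k + 1 < weight w i k" unfolding P_def by blast
  moreover have "weight w j k' \<le> weight w j' k' + 1" if "k' < k" "j \<ge> 1" "j' \<ge> 1" for k' j j'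
  proof -
    have "\<not> P k'" using \<open>k' < k\<close> unfolding k_def by (rule not_less_Least)
    then show ?thesis using that unfolding P_def by (simp add: not_less)
  qed
  ultimately show ?thesis by (rule that)
qed

context
  fixes w :: "nat \<Rightarrow> nat" and i i' k :: nat
  assumes bin: "binary_word w" and i: "i \<ge> 1" "i' \<ge> 1"
    and unbalanced: "weight w i' k + 1 < weight w i k"
    and shorter_balanced: "\<And>k' j j'. k' < k \<Longrightarrow> j \<ge> 1 \<Longrightarrow> j' \<ge> 1 \<Longrightarrow> weight w j k' \<le> weight w j' k' + 1"
begin

lemma shortest_unbalanced_ends:
  obtains n where "k = n + 2" "w i = 1" "w i' = 0" "w (i + (n + 1)) = 1" "w (i' + (n + 1)) = 0"
    and "weight w (i + 1) n = weight w (i' + 1) n"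
proof -
  have "k \<ge> 2"
  proof (rule ccontr)
    assume "\<not> k \<ge> 2"
    then have "k = 0 \<or> k = 1" by auto
    then show False using unbalanced weight_le[OF bin i(1), of 1] by auto
  qed
  then obtain n where kn: "k = n + 2" by (metis add.commute le_add_diff_inverse)
  have first: "weight w i k = w i + weight w (i + 1) (n + 1)" "weight w i' k = w i' + weight w (i' + 1) (n + 1)"
    using weight_Suc_left[of w i "n + 1"] weight_Suc_left[of w i' "n + 1"] kn by simp_all
  have "weight w (i + 1) (n + 1) \<le> weight w (i' + 1) (n + 1) + 1"
    using shorter_balanced[of "n + 1" "i + 1" "i' + 1"] kn by simp
  then have "w i > w i'" using first unbalanced by linarith
  then have wi: "w i = 1" "w i' = 0" using binary_wordD[OF bin i(1)] binary_wordD[OF bin i(2)] by auto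
  have last: "weight w i k = weight w i (n + 1) + w (i + (n + 1))"
    "weight w i' k = weight w i' (n + 1) + w (i' + (n + 1))"
    using weight_Suc_right[of w i "n + 1"] weight_Suc_right[of w i' "n + 1"] kn by simp_all
  have "weight w i (n + 1) \<le> weight w i' (n + 1) + 1" using shorter_balanced[of "n + 1" i i'] kn i by simp
  then have "w (i + (n + 1)) > w (i' + (n + 1))" using last unbalanced by linarith
  then have wl: "w (i + (n + 1)) = 1" "w (i' + (n + 1)) = 0"
    using binary_wordD[OF bin, of "i + (n + 1)"] binary_wordD[OF bin, of "i' + (n + 1)"] by fastforce+
  have "weight w (i + 1) (n + 1) = weight w (i + 1) n + 1" "weight w (i' + 1) (n + 1) = weight w (i' + 1) n"
    using weight_Suc_right[of w "i + 1" n] weight_Suc_right[of w "i' + 1" n] wl by (simp_all add: ac_simps)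
  then have "weight w (i + 1) n = weight w (i' + 1) n"
    using first wi unbalanced shorter_balanced[of "n + 1" "i + 1" "i' + 1"] kn by simp
  then show ?thesis using that kn wi wl by blast
qed

text \<open>If the middle parts differed, cutting at their first difference would give a shorter
  unbalanced pair: a prefix if the letter of the heavier word is 1 there, a suffix otherwise.\<close>

lemma shortest_unbalanced_middle:
  assumes kn: "k = n + 2" and wi: "w i = 1" "w i' = 0"
    and wl: "w (i + (n + 1)) = 1" "w (i' + (n + 1)) = 0"
    and middle: "weight w (i + 1) n = weight w (i' + 1) n"
  shows "factor_at w (i + 1) n = factor_at w (i' + 1) n"
proof (rule ccontr)
  assume "factor_at w (i + 1) n \<noteq> factor_at w (i' + 1) n"
  then have exd: "\<exists>d. d < n \<and> w (i + 1 + d) \<noteq> w (i' + 1 + d)" by (auto simp: factor_at_eq_iff)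
  define d where "d = (LEAST d. d < n \<and> w (i + 1 + d) \<noteq> w (i' + 1 + d))"
  have d: "d < n" "w (i + 1 + d) \<noteq> w (i' + 1 + d)"
    using LeastI_ex[OF exd] unfolding d_def by blast+
  have "\<forall>j<d. w (i + 1 + j) = w (i' + 1 + j)"
  proof (intro allI impI)
    fix j assume "j < d"
    then have "\<not> (j < n \<and> w (i + 1 + j) \<noteq> w (i' + 1 + j))" unfolding d_def by (rule not_less_Least)
    then show "w (i + 1 + j) = w (i' + 1 + j)" using \<open>j < d\<close> d(1) by simp
  qed
  then have X: "weight w (i' + 1) d = weight w (i + 1) d" using weight_cong by metis
  have "w (i + 1 + d) = 0 \<and> w (i' + 1 + d) = 1 \<or> w (i + 1 + d) = 1 \<and> w (i' + 1 + d) = 0"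
    using d(2) binary_wordD[OF bin, of "i + 1 + d"] binary_wordD[OF bin, of "i' + 1 + d"] by auto
  then show False
  proof
    assume h: "w (i + 1 + d) = 1 \<and> w (i' + 1 + d) = 0"
    have "weight w i (d + 2) = weight w (i + 1) d + 2"
      using weight_Suc_left[of w i "d + 1"] weight_Suc_right[of w "i + 1" d] wi h by (simp add: ac_simps)
    moreover have "weight w i' (d + 2) = weight w (i + 1) d"
      using weight_Suc_left[of w i' "d + 1"] weight_Suc_right[of w "i' + 1" d] wi h X by (simp add: ac_simps)
    ultimately show False using shorter_balanced[of "d + 2" i i'] i d kn by simp
  next
    assume h: "w (i + 1 + d) = 0 \<and> w (i' + 1 + d) = 1"
    have split: "weight w (j + 1) n = weight w (j + 1) (d + 1) + weight w (j + 2 + d) (n - d - 1)" for j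
      using weight_add[of w "j + 1" "d + 1" "n - d - 1"] d(1) by (simp add: ac_simps)
    have tail: "weight w (j + 2 + d) (n - d) = weight w (j + 2 + d) (n - d - 1) + w (j + (n + 1))" for j
      using weight_Suc_right[of w "j + 2 + d" "n - d - 1"] d(1) by (simp add: Suc_diff_Suc ac_simps)
    have "weight w (i + 1) (d + 1) = weight w (i + 1) d" "weight w (i' + 1) (d + 1) = weight w (i + 1) d + 1"
      using weight_Suc_right[of w "i + 1" d] weight_Suc_right[of w "i' + 1" d] h X by (simp_all add: ac_simps)
    then have "weight w (i' + 2 + d) (n - d) + 1 < weight w (i + 2 + d) (n - d)"
      using middle split[of i] split[of i'] tail[of i] tail[of i'] wl by simp
    moreover have "n - d < k" using kn by simp
    ultimately show False using shorter_balanced[of "n - d" "i + 2 + d" "i' + 2 + d"] by fastforce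
  qed
qed

end

lemma unbalanced_witness:
  assumes bin: "binary_word w" and nb: "\<not> balanced w"
  obtains a b n where "a \<ge> 2" "b \<ge> 2" "w (a - 1) = 1" "w (a + n) = 1" "w (b - 1) = 0" "w (b + n) = 0"
    and "factor_at w a n = factor_at w b n"
proof -
  obtain i i' k where i: "i \<ge> 1" "i' \<ge> 1" and unbalanced: "weight w i' k + 1 < weight w i k"
    and shorter: "\<And>k' j j'. k' < k \<Longrightarrow> j \<ge> 1 \<Longrightarrow> j' \<ge> 1 \<Longrightarrow> weight w j k' \<le> weight w j' k' + 1"
    using shortest_unbalanced[OF nb] by blast
  obtain n where n: "k = n + 2" "w i = 1" "w i' = 0" "w (i + (n + 1)) = 1" "w (i' + (n + 1)) = 0"
    "weight w (i + 1) n = weight w (i' + 1) n"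
    using shortest_unbalanced_ends[OF bin i unbalanced shorter] by blast
  have "i + 1 \<ge> 2" "i' + 1 \<ge> 2" "w (i + 1 - 1) = 1" "w (i + 1 + n) = 1" "w (i' + 1 - 1) = 0"
    "w (i' + 1 + n) = 0"
    using i n by (simp_all add: add.commute add.left_commute)
  moreover have "factor_at w (i + 1) n = factor_at w (i' + 1) n"
    using shortest_unbalanced_middle[OF bin i unbalanced shorter n] .
  ultimately show ?thesis by (rule that)
qed

lemma two_periods_step:
  fixes f :: "nat \<Rightarrow> nat"
  assumes pq: "p \<le> n" "p + q = n + 2"
    and perp: "\<And>k. 1 \<le> k \<Longrightarrow> k + p \<le> n \<Longrightarrow> f k = f (k + p)"
    and perq: "\<And>k. 1 \<le> k \<Longrightarrow> k + q \<le> n \<Longrightarrow> f k = f (k + q)"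
    and i: "1 \<le> i" "i \<le> n" "i \<noteq> q - 1" "i \<noteq> q"
  obtains i' where "1 \<le> i'" "i' \<le> n" "f i' = f i" "i' mod (p + q) = (i + p) mod (p + q)"
proof (cases "i + 2 \<le> q")
  case True
  then have "i + p \<le> n" using pq by simp
  then show ?thesis using that[of "i + p"] perp[of i] i by simp
next
  case False
  then have qi: "q + 1 \<le> i" using i by auto
  have "(i - q) mod (p + q) = (i - q + (p + q)) mod (p + q)" by simp
  also have "i - q + (p + q) = i + p" using qi by simp
  finally show ?thesis using that[of "i - q"] perq[of "i - q"] qi i by simp
qed

text \<open>Starting at \<open>p\<close> and repeatedly adding \<open>p\<close> or subtracting \<open>q\<close> keeps the letter and stays in
  \<open>[1, n]\<close> unless \<open>q - 1\<close> or \<open>q\<close> is hit; after \<open>p + q - 1\<close> steps the position would be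
  divisible by \<open>p + q > n\<close>.\<close>

lemma two_periods_boundary:
  fixes f :: "nat \<Rightarrow> nat"
  assumes pq: "p \<ge> 1" "q \<ge> 1" "p \<le> n" "p + q = n + 2"
    and perp: "\<And>k. 1 \<le> k \<Longrightarrow> k + p \<le> n \<Longrightarrow> f k = f (k + p)"
    and perq: "\<And>k. 1 \<le> k \<Longrightarrow> k + q \<le> n \<Longrightarrow> f k = f (k + q)"
  shows "f p = f (q - 1) \<or> f p = f q"
proof (rule ccontr)
  assume H: "\<not> ?thesis"
  define N where "N = p + q"
  have walk: "\<exists>i. 1 \<le> i \<and> i \<le> n \<and> f i = f p \<and> i mod N = ((t + 1) * p) mod N" for t
  proof (induction t)
    case 0
    then show ?case using pq by (intro exI[of _ p]) auto
  next
    case (Suc t)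
    then obtain i where i: "1 \<le> i" "i \<le> n" "f i = f p" "i mod N = ((t + 1) * p) mod N" by blast
    have "i \<noteq> q - 1" "i \<noteq> q" using H i(3) by auto
    then obtain i' where "1 \<le> i'" "i' \<le> n" "f i' = f i" "i' mod N = (i + p) mod N"
      using two_periods_step[OF pq(3,4) perp perq i(1,2)] unfolding N_def by blast
    moreover have "(i + p) mod N = ((Suc t + 1) * p) mod N"
    proof -
      have "(i + p) mod N = (i mod N + p) mod N" by (simp add: mod_add_left_eq)
      also have "\<dots> = ((t + 1) * p + p) mod N" using i(4) by (simp add: mod_add_left_eq)
      finally show ?thesis by (simp add: algebra_simps)
    qed
    ultimately show ?case using i(3) by auto
  qed
  obtain i where i: "1 \<le> i" "i \<le> n" "i mod N = ((N - 1 + 1) * p) mod N"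
    using walk by blast
  moreover have "N - 1 + 1 = N" "i mod N = i" using i pq unfolding N_def by simp_all
  ultimately show False by simp
qed

lemma constant_if_step_invariant:
  fixes f :: "nat \<Rightarrow> nat"
  assumes step: "\<And>k. 1 \<le> k \<Longrightarrow> k + 1 \<le> n \<Longrightarrow> f k = f (k + 1)" and n1: "1 \<le> n"
  shows "f 1 = f n"
proof -
  have "f (Suc j) = f 1" if "Suc j \<le> n" for j
    using that
  proof (induction j)
    case (Suc j)
    have "f (Suc j) = f (Suc (Suc j))" using step[of "Suc j"] Suc.prems by simp
    then show ?case using Suc by simp
  qed simp
  from this[of "n - 1"] show ?thesis using n1 by simp
qed

text \<open>An unbalanced Sturmian word contains \<open>1u1\<close> and \<open>0u0\<close> for a factor \<open>u\<close>, which is then its unique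
  right special factor of length \<open>|u|\<close>. The contradiction comes from the returns to \<open>u\<close>: \<open>ret0\<close> and
  \<open>ret1\<close> are the return times after occurrences of \<open>u0\<close> and \<open>u1\<close>, and \<open>last0\<close>, \<open>last1\<close> the letters
  preceding the next occurrence.\<close>

locale unbalanced_sturmian =
  fixes w :: "nat \<Rightarrow> nat" and a b n :: nat
  assumes bin: "binary_word w" and st: "sturmian_word w"
    and a2: "a \<ge> 2" and b2: "b \<ge> 2"
    and wa1: "w (a - 1) = 1" and wan: "w (a + n) = 1"
    and wb1: "w (b - 1) = 0" and wbn: "w (b + n) = 0"
    and fab: "factor_at w a n = factor_at w b n"
begin

definition special :: "nat list" where "special = factor_at w a n"
definition occ :: "nat set" where "occ = {t. t \<ge> 1 \<and> factor_at w t n = special}"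

lemma letter_01: "t \<ge> 1 \<Longrightarrow> w t = 0 \<or> w t = 1" using binary_wordD[OF bin] by blast

lemma a_occ: "a \<in> occ" and b_occ: "b \<in> occ"
  unfolding occ_def special_def using a2 b2 fab by auto

lemma occ_ge1: "t \<in> occ \<Longrightarrow> t \<ge> 1" unfolding occ_def by auto

lemma length_special [simp]: "length special = n" unfolding special_def by simp

lemma special_in_factors: "special \<in> factors w n" unfolding special_def using factor_at_in_factors a2 by simp

lemma special_right_special: "right_special w special"
proof -
  have "special @ [1] = factor_at w a (Suc n)" unfolding special_def using factor_at_Suc_snoc wan by metis
  moreover have "special @ [0] = factor_at w b (Suc n)" unfolding special_def using factor_at_Suc_snoc wbn fab by metis
  ultimately show ?thesis unfolding right_special_def using factor_at_in_factors a2 b2 by simp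
qed

lemma right_special_eq_special: "u \<in> factors w n \<Longrightarrow> right_special w u \<Longrightarrow> u = special"
  using sturmian_right_special_unique[OF bin st _ _ special_in_factors special_right_special] by blast

lemma extension_unique:
  assumes "t \<ge> 1" "t' \<ge> 1" "factor_at w t n = factor_at w t' n" "factor_at w t n \<noteq> special"
  shows "w (t + n) = w (t' + n)"
proof (rule ccontr)
  assume ne: "w (t + n) \<noteq> w (t' + n)"
  have f1: "factor_at w t n @ [w (t+n)] \<in> factors w (Suc n)" using factor_at_in_factors[OF assms(1), of w "Suc n"] factor_at_Suc_snoc by metis
  have f2: "factor_at w t n @ [w (t'+n)] \<in> factors w (Suc n)" using factor_at_in_factors[OF assms(2), of w "Suc n"] factor_at_Suc_snoc assms(3) by metis
  have "w (t + n) = 0 \<or> w (t + n) = 1" "w (t' + n) = 0 \<or> w (t' + n) = 1" using letter_01 assms by auto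
  then have "right_special w (factor_at w t n)" unfolding right_special_def using f1 f2 ne by auto
  then show False using right_special_eq_special factor_at_in_factors assms by blast
qed

lemma occ_unbounded: "\<exists>t\<ge>i. t \<in> occ"
proof -
  obtain t where t: "t \<ge> max i 1" "right_special w (factor_at w t n)" using sturmian_right_special_unbounded[OF bin st, of "max i 1" n] by auto
  then have "factor_at w t n = special" using right_special_eq_special factor_at_in_factors by simp
  then show ?thesis using t unfolding occ_def by auto
qed

definition next_occ :: "nat \<Rightarrow> nat" where "next_occ t = (LEAST t'. t < t' \<and> t' \<in> occ)"

lemma next_occ_exists: "\<exists>t'. t < t' \<and> t' \<in> occ"
proof -
  obtain t' where "t' \<ge> Suc t" "t' \<in> occ" using occ_unbounded by blast
  then show ?thesis by (intro exI[of _ t']) auto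
qed

lemma next_occ_gt: "t < next_occ t" and next_occ_in_occ: "next_occ t \<in> occ"
  using LeastI_ex[OF next_occ_exists[of t]] unfolding next_occ_def by auto

lemma not_occ_before_next: "t < s \<Longrightarrow> s < next_occ t \<Longrightarrow> s \<notin> occ"
  unfolding next_occ_def using not_less_Least by blast

lemma next_occ_le: "t < s \<Longrightarrow> s \<in> occ \<Longrightarrow> next_occ t \<le> s"
  unfolding next_occ_def by (rule Least_le) simp

lemma factor_at_ne_special: "t \<ge> 1 \<Longrightarrow> t \<notin> occ \<Longrightarrow> factor_at w t n \<noteq> special"
  unfolding occ_def by auto

text \<open>Two occurrences of the special factor with the same right extension are followed by the same
  letters up to the next occurrence: in between, no occurrence is special, so each extension is forced.\<close>

lemma return_block_agree:
  assumes t: "t \<in> occ" and t': "t' \<in> occ" and e: "w (t + n) = w (t' + n)"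
  shows "s < next_occ t' - t' + n \<Longrightarrow> w (t + s) = w (t' + s)"
proof (induction s rule: less_induct)
  case (less s)
  have t1: "t \<ge> 1" "t' \<ge> 1" using t t' occ_ge1 by auto
  consider "s < n" | "s = n" | "n < s" by linarith
  then show ?case
  proof cases
    case 1
    have "factor_at w t n = factor_at w t' n" using t t' unfolding occ_def by simp
    then show ?thesis using 1 factor_at_eq_iff by blast
  next
    case 2
    then show ?thesis using e by simp
  next
    case 3
    define s0 where "s0 = s - n"
    have s: "s = s0 + n" "0 < s0" "t' + s0 < next_occ t'" using 3 less.prems unfolding s0_def by auto
    have "factor_at w (t + s0) n = factor_at w (t' + s0) n"
      unfolding factor_at_eq_iff using less.IH s by (simp add: add.assoc)
    moreover have "factor_at w (t' + s0) n \<noteq> special"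
      using not_occ_before_next[of t' "t' + s0"] s factor_at_ne_special t1 by simp
    ultimately show ?thesis using extension_unique[of "t + s0" "t' + s0"] t1 s by (simp add: add.assoc)
  qed
qed

lemma next_occ_shift:
  assumes t: "t \<in> occ" and t': "t' \<in> occ" and e: "w (t + n) = w (t' + n)"
  shows "next_occ t = t + (next_occ t' - t')"
proof -
  define L where "L = next_occ t' - t'"
  have t1: "t \<ge> 1" "t' \<ge> 1" using t t' occ_ge1 by auto
  have L: "t' + L = next_occ t'" "L \<ge> 1" using next_occ_gt[of t'] unfolding L_def by simp_all
  have eqw: "factor_at w (t + s) n = factor_at w (t' + s) n" if "s \<le> L" for s
    unfolding factor_at_eq_iff using return_block_agree[OF t t' e] that L_def by (simp add: add.assoc)
  have "next_occ t = t + L"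
    unfolding next_occ_def
  proof (rule Least_equality)
    show "t < t + L \<and> t + L \<in> occ"
      using eqw[of L] next_occ_in_occ[of t'] L t1 unfolding occ_def by simp
  next
    fix y assume y: "t < y \<and> y \<in> occ"
    show "t + L \<le> y"
    proof (rule ccontr)
      assume "\<not> t + L \<le> y"
      then obtain s0 where s0: "y = t + s0" "0 < s0" "s0 < L"
        using y by (metis add_less_cancel_left less_imp_add_positive not_le)
      have "t' + s0 \<notin> occ" using not_occ_before_next[of t' "t' + s0"] s0 L by simp
      then show False using y s0 eqw[of s0] factor_at_ne_special t1 unfolding occ_def by simp
    qed
  qed
  then show ?thesis unfolding L_def .
qed

definition ret0 :: nat where "ret0 = next_occ b - b"
definition ret1 :: nat where "ret1 = next_occ a - a"
definition last0 :: nat where "last0 = w (next_occ b - 1)"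
definition last1 :: nat where "last1 = w (next_occ a - 1)"

lemma ret_pos: "ret0 \<ge> 1" "ret1 \<ge> 1"
  unfolding ret0_def ret1_def using next_occ_gt[of a] next_occ_gt[of b] by auto

lemma occ_block_0:
  assumes "t \<in> occ" "w (t + n) = 0"
  shows "\<And>s. s < ret0 + n \<Longrightarrow> w (t + s) = w (b + s)" and "next_occ t = t + ret0"
  using return_block_agree[OF assms(1) b_occ] next_occ_shift[OF assms(1) b_occ] assms(2) wbn
  unfolding ret0_def by auto

lemma occ_block_1:
  assumes "t \<in> occ" "w (t + n) \<noteq> 0"
  shows "\<And>s. s < ret1 + n \<Longrightarrow> w (t + s) = w (a + s)" and "next_occ t = t + ret1"
proof -
  have "w (t + n) = w (a + n)" using letter_01[of "t + n"] occ_ge1[OF assms(1)] assms(2) wan by auto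
  then show "\<And>s. s < ret1 + n \<Longrightarrow> w (t + s) = w (a + s)" "next_occ t = t + ret1"
    using return_block_agree[OF assms(1) a_occ] next_occ_shift[OF assms(1) a_occ] unfolding ret1_def by auto
qed

lemma letter_before_next_occ:
  assumes t: "t \<in> occ"
  shows "w (next_occ t - 1) = (if w (t + n) = 0 then last0 else last1)"
proof (cases "w (t + n) = 0")
  case True
  have "w (t + (ret0 - 1)) = w (b + (ret0 - 1))" using occ_block_0(1)[OF t True, of "ret0 - 1"] ret_pos by simp
  moreover have "b + (ret0 - 1) = next_occ b - 1" unfolding ret0_def using next_occ_gt[of b] by simp
  ultimately show ?thesis using True occ_block_0(2)[OF t True] ret_pos unfolding last0_def by simp
next
  case False
  have "w (t + (ret1 - 1)) = w (a + (ret1 - 1))" using occ_block_1(1)[OF t False, of "ret1 - 1"] ret_pos by simp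
  moreover have "a + (ret1 - 1) = next_occ a - 1" unfolding ret1_def using next_occ_gt[of a] by simp
  ultimately show ?thesis using False occ_block_1(2)[OF t False] ret_pos unfolding last1_def by simp
qed

lemma occ_before:
  assumes t0: "t0 \<in> occ" and le: "t0 \<le> \<tau>"
  shows "\<exists>t\<in>occ. t0 \<le> t \<and> t \<le> \<tau> \<and> \<tau> < next_occ t"
proof -
  define S where "S = {s. s \<in> occ \<and> t0 \<le> s \<and> s \<le> \<tau>}"
  have fin: "finite S" unfolding S_def by (rule finite_subset[of _ "{..\<tau>}"]) auto
  have ne: "S \<noteq> {}" unfolding S_def using t0 le by auto
  define t where "t = Max S"
  have tS: "t \<in> S" unfolding t_def using fin ne by simp
  have "\<tau> < next_occ t"
  proof (rule ccontr)
    assume "\<not> \<tau> < next_occ t"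
    then have "next_occ t \<in> S" unfolding S_def using next_occ_in_occ[of t] next_occ_gt[of t] tS unfolding S_def by auto
    then have "next_occ t \<le> t" unfolding t_def using fin by simp
    then show False using next_occ_gt[of t] by simp
  qed
  then show ?thesis using tS unfolding S_def by auto
qed

lemma occ_predecessor:
  assumes t0: "t0 \<in> occ" and lt: "t0 < \<tau>" and tau: "\<tau> \<in> occ"
  shows "\<exists>t\<in>occ. t0 \<le> t \<and> t < \<tau> \<and> next_occ t = \<tau>"
proof -
  obtain t where t: "t \<in> occ" "t0 \<le> t" "t \<le> \<tau> - 1" "\<tau> - 1 < next_occ t"
  proof -
    have "t0 \<le> \<tau> - 1" using lt by simp
    then show ?thesis using occ_before[OF t0, of "\<tau> - 1"] that by blast
  qed
  have "t < \<tau>" using t lt by simp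
  then have "next_occ t \<le> \<tau>" using next_occ_le tau by simp
  then show ?thesis using t \<open>t < \<tau>\<close> by (intro bexI[of _ t]) auto
qed

lemma occ_letters: "t \<in> occ \<Longrightarrow> j < n \<Longrightarrow> w (t + j) = w (a + j)"
  unfolding occ_def special_def using factor_at_eq_iff by blast

lemma last_letters_differ: "last0 = last1 \<Longrightarrow> False"
proof -
  assume eq: "last0 = last1"
  have preceded_occ: "\<exists>\<tau>\<in>occ. b < \<tau> \<and> w (\<tau> - 1) = c" if c: "c = w (i0 - 1)" "i0 \<in> occ" "i0 \<ge> 2" for c i0
  proof -
    obtain t' where t': "t' \<ge> b" "factor_at w t' (Suc n) = factor_at w (i0 - 1) (Suc n)"
    proof -
      have "i0 - 1 \<ge> 1" using c by simp
      then show ?thesis using sturmian_factor_recurrent[OF bin st, of "i0 - 1" b "Suc n"] that by blast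
    qed
    have "factor_at w (i0 - 1) (Suc n) = w (i0 - 1) # factor_at w i0 n" using factor_at_Suc_Cons[of w "i0 - 1" n] c by simp
    moreover have "factor_at w t' (Suc n) = w t' # factor_at w (Suc t') n" by (rule factor_at_Suc_Cons)
    ultimately have "w t' = c" "factor_at w (Suc t') n = special" using t' c unfolding occ_def by auto
    moreover have "Suc t' - 1 = t'" by simp
    ultimately show ?thesis using t' b2 unfolding occ_def by (intro bexI[of _ "Suc t'"]) auto
  qed
  obtain \<tau>1 where t1: "\<tau>1 \<in> occ" "b < \<tau>1" "w (\<tau>1 - 1) = 1" using preceded_occ[of 1 a] wa1 a_occ a2 by auto
  obtain \<tau>2 where t2: "\<tau>2 \<in> occ" "b < \<tau>2" "w (\<tau>2 - 1) = 0" using preceded_occ[of 0 b] wb1 b_occ b2 by auto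
  obtain s1 where s1: "s1 \<in> occ" "next_occ s1 = \<tau>1" using occ_predecessor[OF b_occ t1(2) t1(1)] by auto
  obtain s2 where s2: "s2 \<in> occ" "next_occ s2 = \<tau>2" using occ_predecessor[OF b_occ t2(2) t2(1)] by auto
  have "w (\<tau>1 - 1) = last0" using letter_before_next_occ[OF s1(1)] s1(2) eq by (simp split: if_splits)
  moreover have "w (\<tau>2 - 1) = last0" using letter_before_next_occ[OF s2(1)] s2(2) eq by (simp split: if_splits)
  ultimately show False using t1 t2 by simp
qed

lemma factor_at_around:
  assumes "t \<ge> 1"
  shows "factor_at w (t - 1) (Suc (Suc n)) = w (t - 1) # factor_at w t n @ [w (t + n)]"
proof -
  have "factor_at w (t - 1) (Suc (Suc n)) = w (t - 1) # factor_at w (Suc (t - 1)) (Suc n)" by (rule factor_at_Suc_Cons)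
  also have "Suc (t - 1) = t" using assms by simp
  finally have "factor_at w (t - 1) (Suc (Suc n)) = w (t - 1) # factor_at w t (Suc n)" .
  moreover have "factor_at w t (Suc n) = factor_at w t n @ [w (t + n)]" by (rule factor_at_Suc_snoc)
  ultimately show ?thesis by simp
qed

lemma occ_with_extension:
  assumes "t0 \<ge> 1" "e' = 0 \<or> e' = 1"
  shows "\<exists>\<tau>1\<in>occ. t0 < \<tau>1 \<and> w (\<tau>1 + n) = e'"
proof -
  obtain r where r: "r \<in> occ" "w (r + n) = e'"
  proof (cases "e' = 0")
    case True then show ?thesis using that b_occ wbn by blast
  next
    case False then have "e' = 1" using assms(2) by blast
    then show ?thesis using that a_occ wan by blast
  qed
  have "r \<ge> 1" using occ_ge1 r by simp
  then obtain t1 where t1: "t1 \<ge> Suc t0" "factor_at w t1 (Suc n) = factor_at w r (Suc n)"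
    using sturmian_factor_recurrent[OF bin st, of r "Suc t0" "Suc n"] by blast
  then have "factor_at w t1 n @ [w (t1 + n)] = factor_at w r n @ [w (r + n)]"
    using factor_at_Suc_snoc[of w t1 n] factor_at_Suc_snoc[of w r n] by metis
  then have "factor_at w t1 n = factor_at w r n" "w (t1 + n) = w (r + n)" by simp_all
  then have "factor_at w t1 n = special" "w (t1 + n) = e'" using r unfolding occ_def by auto
  then show ?thesis using t1 unfolding occ_def by (intro bexI[of _ t1]) auto
qed

lemma occ_extension_switch:
  assumes t0: "t0 \<in> occ" and e: "w (t0 + n) = e" and ee: "e' \<noteq> e" "e' = 0 \<or> e' = 1" "e = 0 \<or> e = 1"
  shows "\<exists>\<tau>\<in>occ. t0 < \<tau> \<and> w (\<tau> + n) = e' \<and> (\<exists>t\<in>occ. next_occ t = \<tau> \<and> w (t + n) = e)"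
proof -
  define Q where "Q \<tau> \<longleftrightarrow> \<tau> \<in> occ \<and> t0 < \<tau> \<and> w (\<tau> + n) = e'" for \<tau>
  obtain \<tau>1 where "\<tau>1 \<in> occ" "t0 < \<tau>1" "w (\<tau>1 + n) = e'" using occ_with_extension[of t0 e'] occ_ge1[OF t0] ee(2) by blast
  then have ex: "\<exists>\<tau>. Q \<tau>" unfolding Q_def by blast
  define \<tau> where "\<tau> = (LEAST \<tau>. Q \<tau>)"
  have Q: "Q \<tau>" unfolding \<tau>_def using LeastI_ex[OF ex] .
  then have Q': "\<tau> \<in> occ" "t0 < \<tau>" "w (\<tau> + n) = e'" unfolding Q_def by auto
  obtain t where t: "t \<in> occ" "t0 \<le> t" "t < \<tau>" "next_occ t = \<tau>"
    using occ_predecessor[OF t0 Q'(2) Q'(1)] by blast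
  have "w (t + n) = e"
  proof (cases "t = t0")
    case True then show ?thesis using e by simp
  next
    case False
    have "t < (LEAST \<tau>. Q \<tau>)" using t(3) unfolding \<tau>_def .
    then have "\<not> Q t" by (rule not_less_Least)
    moreover have "t0 < t" using t(2) False by simp
    ultimately have "w (t + n) \<noteq> e'" unfolding Q_def using t(1) by blast
    moreover have "w (t + n) = 0 \<or> w (t + n) = 1" using letter_01 occ_ge1[OF t(1)] by simp
    ultimately show ?thesis using ee by auto
  qed
  then show ?thesis using Q' t by blast
qed

lemma last_letters_not_01: "last0 = 0 \<Longrightarrow> last1 = 1 \<Longrightarrow> False"
proof -
  assume y: "last0 = 0" "last1 = 1"
  obtain \<tau> t where A: "\<tau> \<in> occ" "b < \<tau>" "w (\<tau> + n) = 1" "t \<in> occ" "next_occ t = \<tau>" "w (t + n) = 0"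
    using occ_extension_switch[OF b_occ wbn, of 1] by auto
  have wA: "w (\<tau> - 1) = 0" using letter_before_next_occ[OF A(4)] A y by simp
  obtain \<tau>' t' where B: "\<tau>' \<in> occ" "a < \<tau>'" "w (\<tau>' + n) = 0" "t' \<in> occ" "next_occ t' = \<tau>'" "w (t' + n) = 1"
    using occ_extension_switch[OF a_occ wan, of 0] by auto
  have wB: "w (\<tau>' - 1) = 1" using letter_before_next_occ[OF B(4)] B y by simp
  have Afac: "factor_at w \<tau> n = special" "factor_at w \<tau>' n = special" "factor_at w a n = special" "factor_at w b n = special"
    using A B a_occ b_occ unfolding occ_def by auto
  have f1: "(0 # special) @ [1] \<in> factors w (Suc (length (0 # special)))"
    using factor_at_around[of \<tau>] factor_at_in_factors[of "\<tau> - 1" w "Suc (Suc n)"] A(2) b2 Afac wA A(3) by simp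
  have f2: "(0 # special) @ [0] \<in> factors w (Suc (length (0 # special)))"
    using factor_at_around[of b] factor_at_in_factors[of "b - 1" w "Suc (Suc n)"] b2 Afac wb1 wbn by simp
  have f3: "(1 # special) @ [0] \<in> factors w (Suc (length (1 # special)))"
    using factor_at_around[of \<tau>'] factor_at_in_factors[of "\<tau>' - 1" w "Suc (Suc n)"] B(2) a2 Afac wB B(3) by simp
  have f4: "(1 # special) @ [1] \<in> factors w (Suc (length (1 # special)))"
    using factor_at_around[of a] factor_at_in_factors[of "a - 1" w "Suc (Suc n)"] a2 Afac wa1 wan by simp
  have r0: "right_special w (0 # special)" using f1 f2 unfolding right_special_def by simp
  have r1: "right_special w (1 # special)" using f3 f4 unfolding right_special_def by simp
  have i0: "0 # special \<in> factors w (Suc n)" using factors_snocD f1 by simp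
  have i1: "1 # special \<in> factors w (Suc n)" using factors_snocD f3 by simp
  have "0 # special = 1 # special" using sturmian_right_special_unique[OF bin st i0 r0 i1 r1] .
  then show False by simp
qed

lemma factor_ne_special_within_return: "t \<in> occ \<Longrightarrow> 0 < s \<Longrightarrow> s < next_occ t - t \<Longrightarrow> factor_at w (t + s) n \<noteq> special"
  using not_occ_before_next[of t "t + s"] factor_at_ne_special[of "t + s"] occ_ge1[of t] by auto

lemma factors_agree_until_special:
  assumes "p \<ge> 1" "p' \<ge> 1" "factor_at w p n = factor_at w p' n" "\<forall>r<R. factor_at w (p + r) n \<noteq> special"
  shows "factor_at w (p + R) n = factor_at w (p' + R) n"
  using assms(4)
proof (induct R)
  case 0 then show ?case using assms(3) by simp
next
  case (Suc R)
  then have ih: "factor_at w (p + R) n = factor_at w (p' + R) n" by simp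
  have "factor_at w (p + R) n \<noteq> special" using Suc.prems by simp
  then have "w (p + R + n) = w (p' + R + n)" using extension_unique[of "p + R" "p' + R"] ih assms(1,2) by simp
  then show ?case using ih factor_at_Suc_shift[of w "p + R" n] factor_at_Suc_shift[of w "p' + R" n] by simp
qed

lemma inj_on_return_block:
  assumes t: "t \<in> occ"
  shows "inj_on (\<lambda>s. factor_at w (t + s) n) {..<next_occ t - t}"
proof -
  define L where "L = next_occ t - t"
  have t1: "t \<ge> 1" using occ_ge1 t by simp
  have main: "False" if ss: "s < s'" "s' < L" "factor_at w (t + s) n = factor_at w (t + s') n" for s s'
  proof (cases "s = 0")
    case True
    then have "factor_at w (t + s') n = special" using ss t unfolding occ_def by simp
    then show False using factor_ne_special_within_return[OF t, of s'] ss True unfolding L_def by simp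
  next
    case False
    have "factor_at w (t + s' + (L - s')) n = factor_at w (t + s + (L - s')) n"
    proof (rule factors_agree_until_special)
      show "t + s' \<ge> 1" "t + s \<ge> 1" using t1 by auto
      show "factor_at w (t + s') n = factor_at w (t + s) n" using ss by simp
      show "\<forall>r<L - s'. factor_at w (t + s' + r) n \<noteq> special"
        using factor_ne_special_within_return[OF t] ss unfolding L_def by (simp add: add.assoc)
    qed
    moreover have "t + s' + (L - s') = next_occ t" using ss next_occ_gt[of t] unfolding L_def by simp
    moreover have "factor_at w (t + (s + (L - s'))) n \<noteq> special"
      using factor_ne_special_within_return[OF t, of "s + (L - s')"] ss False unfolding L_def by simp
    ultimately show False using next_occ_in_occ[of t] unfolding occ_def by (simp add: add.assoc)
  qed
  show ?thesis unfolding inj_on_def L_def[symmetric]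
  proof (intro ballI impI)
    fix s s' assume "s \<in> {..<L}" "s' \<in> {..<L}" "factor_at w (t + s) n = factor_at w (t + s') n"
    then show "s = s'" using main[of s s'] main[of s' s] by (cases s s' rule: linorder_cases) auto
  qed
qed

lemma common_factor_same_last_letter:
  assumes t: "t \<in> occ" and t': "t' \<in> occ"
    and s: "0 < s" "s < next_occ t - t" and s': "0 < s'" "s' < next_occ t' - t'"
    and eq: "factor_at w (t + s) n = factor_at w (t' + s') n"
    and le: "next_occ t - t - s \<le> next_occ t' - t' - s'" and n1: "n \<ge> 1"
  shows "w (next_occ t - 1) = w (next_occ t' - 1)"
proof -
  define L where "L = next_occ t - t"
  define L' where "L' = next_occ t' - t'"
  define R where "R = L - s"
  have t1: "t \<ge> 1" "t' \<ge> 1" using occ_ge1 t t' by auto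
  have fw: "factor_at w (t + s + R') n = factor_at w (t' + s' + R') n" if "R' \<le> R" for R'
  proof (rule factors_agree_until_special)
    show "t + s \<ge> 1" "t' + s' \<ge> 1" using t1 by auto
    show "factor_at w (t + s) n = factor_at w (t' + s') n" by (rule eq)
    show "\<forall>r<R'. factor_at w (t + s + r) n \<noteq> special"
      using factor_ne_special_within_return[OF t] s that unfolding R_def L_def by (simp add: add.assoc)
  qed
  have R1: "R \<ge> 1" unfolding R_def L_def using s by simp
  have "t + s + R = next_occ t" unfolding R_def L_def using s next_occ_gt[of t] by simp
  then have "factor_at w (t' + s' + R) n = special" using fw[of R] next_occ_in_occ[of t] unfolding occ_def by simp
  then have "\<not> (s' + R < L')"
  proof (intro notI)
    assume "factor_at w (t' + s' + R) n = special" "s' + R < L'"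
    moreover have "0 < s' + R" using s' by simp
    ultimately show False using factor_ne_special_within_return[OF t', of "s' + R"] unfolding L'_def by (simp add: add.assoc)
  qed
  then have eqL: "s' + R = L'" using le s' R1 unfolding R_def L_def L'_def by simp
  have "factor_at w (t + s + (R - 1)) n = factor_at w (t' + s' + (R - 1)) n" using fw[of "R - 1"] by simp
  moreover have "t + s + (R - 1) = next_occ t - 1" unfolding R_def L_def using s next_occ_gt[of t] by simp
  moreover have "t' + s' + (R - 1) = next_occ t' - 1" using eqL R1 next_occ_gt[of t'] unfolding L'_def by simp
  ultimately have "factor_at w (next_occ t - 1) n = factor_at w (next_occ t' - 1) n" by simp
  then show ?thesis using nth_factor_at[of 0 n w "next_occ t - 1"] nth_factor_at[of 0 n w "next_occ t' - 1"] n1 by simp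
qed

lemma return_block_letters:
  assumes T: "T \<in> occ" and lam: "lam = next_occ T - T" and ln: "lam \<le> n"
  shows "\<And>k. 1 \<le> k \<Longrightarrow> k + lam \<le> n \<Longrightarrow> w (a + k - 1) = w (a + (k + lam) - 1)"
    and "w (next_occ T - 1) = w (a + lam - 1)"
    and "w (T + n) = w (a + (n - lam + 1) - 1)"
proof -
  have lp: "lam \<ge> 1" "next_occ T = T + lam" using lam next_occ_gt[of T] by auto
  have L: "\<And>t k. t \<in> occ \<Longrightarrow> 1 \<le> k \<Longrightarrow> k \<le> n \<Longrightarrow> w (t + k - 1) = w (a + k - 1)"
  proof -
    fix t k :: nat assume "t \<in> occ" "1 \<le> k" "k \<le> n"
    then have "k - 1 < n" by simp
    then have "w (t + (k - 1)) = w (a + (k - 1))" using occ_letters \<open>t \<in> occ\<close> by blast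
    then show "w (t + k - 1) = w (a + k - 1)" using \<open>1 \<le> k\<close> by simp
  qed
  show "w (a + k - 1) = w (a + (k + lam) - 1)" if "1 \<le> k" "k + lam \<le> n" for k
  proof -
    have "w (next_occ T + k - 1) = w (a + k - 1)" using L[OF next_occ_in_occ[of T]] that by simp
    moreover have "w (T + (k + lam) - 1) = w (a + (k + lam) - 1)" using L[OF T, of "k + lam"] that by simp
    moreover have "next_occ T + k - 1 = T + (k + lam) - 1" using lp by simp
    ultimately show ?thesis by simp
  qed
  show "w (next_occ T - 1) = w (a + lam - 1)"
    using L[OF T, of lam] lp ln by simp
  show "w (T + n) = w (a + (n - lam + 1) - 1)"
  proof -
    have "w (next_occ T + (n - lam + 1) - 1) = w (a + (n - lam + 1) - 1)"
      using L[OF next_occ_in_occ[of T], of "n - lam + 1"] lp ln by simp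
    moreover have "next_occ T + (n - lam + 1) - 1 = T + n" using lp ln by simp
    ultimately show ?thesis by simp
  qed
qed

lemma last_letter_if_return_1:
  assumes T: "T \<in> occ" and ret: "next_occ T - T = 1" and n1: "n \<ge> 1"
  shows "w (next_occ T - 1) = w (T + n)"
proof -
  note B = return_block_letters[OF T ret[symmetric] n1]
  have "w (a + 1 - 1) = w (a + n - 1)"
    by (rule constant_if_step_invariant[where f = "\<lambda>k. w (a + k - 1)", OF B(1) n1])
  then show ?thesis using B(2,3) n1 by simp
qed

definition return_factors :: "nat \<Rightarrow> nat list set" where
  "return_factors t = (\<lambda>s. factor_at w (t + s) n) ` {..<next_occ t - t}"

lemma card_return_factors: "t \<in> occ \<Longrightarrow> card (return_factors t) = next_occ t - t"
  unfolding return_factors_def using inj_on_return_block by (simp add: card_image)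

lemma return_factors_inter:
  assumes lasts: "last0 \<noteq> last1" and n1: "n \<ge> 1"
  shows "return_factors b \<inter> return_factors a = {special}"
proof
  show "{special} \<subseteq> return_factors b \<inter> return_factors a"
    unfolding return_factors_def using next_occ_gt[of a] next_occ_gt[of b] a_occ b_occ unfolding occ_def
    by (auto intro!: image_eqI[of _ _ 0])
  show "return_factors b \<inter> return_factors a \<subseteq> {special}"
  proof
    fix u assume "u \<in> return_factors b \<inter> return_factors a"
    then obtain s s' where ss: "s < next_occ b - b" "s' < next_occ a - a"
      and u: "u = factor_at w (b + s) n" "u = factor_at w (a + s') n"
      unfolding return_factors_def by auto
    show "u \<in> {special}"
    proof (cases "s = 0 \<or> s' = 0")
      case True
      then show ?thesis using u a_occ b_occ unfolding occ_def by auto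
    next
      case False
      have eq: "factor_at w (b + s) n = factor_at w (a + s') n" using u by simp
      have "w (next_occ b - 1) = w (next_occ a - 1)"
      proof (cases "next_occ b - b - s \<le> next_occ a - a - s'")
        case True
        then show ?thesis using common_factor_same_last_letter[OF b_occ a_occ _ ss(1) _ ss(2) eq True n1] False
          by simp
      next
        case False
        then show ?thesis
          using common_factor_same_last_letter[OF a_occ b_occ _ ss(2) _ ss(1) eq[symmetric] _ n1] \<open>\<not> (s = 0 \<or> s' = 0)\<close>
          by simp
      qed
      then show ?thesis using lasts unfolding last0_def last1_def by simp
    qed
  qed
qed

lemma factor_in_return_factors:
  assumes t: "t \<in> occ" and tau: "t \<le> \<tau>" "\<tau> < next_occ t"
  shows "factor_at w \<tau> n \<in> return_factors b \<union> return_factors a"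
proof -
  define s where "s = \<tau> - t"
  show ?thesis
  proof (cases "w (t + n) = 0")
    case True
    note B = occ_block_0[OF t True]
    have s: "\<tau> = t + s" "s < ret0" using tau B(2) unfolding s_def by auto
    have "factor_at w \<tau> n = factor_at w (b + s) n" unfolding factor_at_eq_iff using B(1) s by (simp add: add.assoc)
    then show ?thesis unfolding return_factors_def ret0_def[symmetric] using s(2) by blast
  next
    case False
    note B = occ_block_1[OF t False]
    have s: "\<tau> = t + s" "s < ret1" using tau B(2) unfolding s_def by auto
    have "factor_at w \<tau> n = factor_at w (a + s) n" unfolding factor_at_eq_iff using B(1) s by (simp add: add.assoc)
    then show ?thesis unfolding return_factors_def ret1_def[symmetric] using s(2) by blast
  qed
qed

text \<open>Every factor of length \<open>n\<close> recurs after \<open>b\<close>, hence inside the return block of some occurrence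
  of the special factor, and these blocks look like those of \<open>b\<close> or of \<open>a\<close>.\<close>

lemma factors_eq_return_factors: "factors w n = return_factors b \<union> return_factors a"
proof
  show "factors w n \<subseteq> return_factors b \<union> return_factors a"
  proof
    fix u assume "u \<in> factors w n"
    then obtain i where i: "i \<ge> 1" "u = factor_at w i n" unfolding factors_eq_image by auto
    obtain \<tau> where tau: "\<tau> \<ge> b" "factor_at w \<tau> n = u" using sturmian_factor_recurrent[OF bin st i(1), of b n] i by auto
    obtain t where "t \<in> occ" "t \<le> \<tau>" "\<tau> < next_occ t" using occ_before[OF b_occ tau(1)] by auto
    then show "u \<in> return_factors b \<union> return_factors a" using factor_in_return_factors tau(2) by blast
  qed
  show "return_factors b \<union> return_factors a \<subseteq> factors w n"
    unfolding return_factors_def using factor_at_in_factors a2 b2 by auto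
qed

lemma ret_sum:
  assumes "last0 \<noteq> last1" "n \<ge> 1"
  shows "ret0 + ret1 = n + 2"
proof -
  have fin: "finite (return_factors b)" "finite (return_factors a)" unfolding return_factors_def by auto
  have "n + 1 = card (return_factors b \<union> return_factors a)"
    using sturmian_card_factors[OF st, of n] factors_eq_return_factors by simp
  also have "\<dots> = ret0 + ret1 - 1"
    using card_Un_Int[OF fin] card_return_factors[OF b_occ] card_return_factors[OF a_occ]
      return_factors_inter[OF assms] unfolding ret0_def ret1_def by simp
  finally show ?thesis using ret_pos by simp
qed

lemma last_letters_not_10: "last0 = 1 \<Longrightarrow> last1 = 0 \<Longrightarrow> False"
proof -
  assume y: "last0 = 1" "last1 = 0"
  have n1: "n \<ge> 1"
  proof (rule ccontr)
    assume "\<not> n \<ge> 1"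
    then have n0: "n = 0" by simp
    have "b + 1 \<in> occ" unfolding occ_def special_def using n0 by (simp add: factor_at_def)
    then have "next_occ b = b + 1" using next_occ_le[of b "b + 1"] next_occ_gt[of b] by simp
    then show False using y wbn n0 unfolding last0_def by simp
  qed
  have sum: "ret0 + ret1 = n + 2" using ret_sum y n1 by simp
  have ret_defs: "ret0 = next_occ b - b" "ret1 = next_occ a - a" unfolding ret0_def ret1_def by auto
  consider "ret0 \<le> n" "ret1 \<le> n" | "ret0 = 1" | "ret1 = 1" using sum ret_pos by linarith
  then show False
  proof cases
    case 1
    define f where "f k = w (a + k - 1)" for k
    note B0 = return_block_letters[OF b_occ ret_defs(1) 1(1)]
      and B1 = return_block_letters[OF a_occ ret_defs(2) 1(2)]
    have "f ret0 = 1" using B0(2) y unfolding f_def last0_def by simp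
    moreover have "f ret1 = 0" using B1(2) y unfolding f_def last1_def by simp
    moreover have "f (ret1 - 1) = 0"
    proof -
      have "ret1 - 1 = n - ret0 + 1" using sum 1 by arith
      then show ?thesis using B0(3) wbn unfolding f_def by simp
    qed
    moreover have "f ret0 = f (ret1 - 1) \<or> f ret0 = f ret1"
    proof (rule two_periods_boundary[OF ret_pos(1) ret_pos(2) 1(1) sum])
      show "f k = f (k + ret0)" if "1 \<le> k" "k + ret0 \<le> n" for k
        unfolding f_def using B0(1)[OF that] by simp
      show "f k = f (k + ret1)" if "1 \<le> k" "k + ret1 \<le> n" for k
        unfolding f_def using B1(1)[OF that] by simp
    qed
    ultimately show False by auto
  next
    case 2
    then show False using last_letter_if_return_1[OF b_occ _ n1] y wbn unfolding ret0_def last0_def by simp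
  next
    case 3
    then show False using last_letter_if_return_1[OF a_occ _ n1] y wan unfolding ret1_def last1_def by simp
  qed
qed

theorem impossible: False
proof -
  have "last0 = 0 \<or> last0 = 1" "last1 = 0 \<or> last1 = 1"
    unfolding last0_def last1_def using letter_01 next_occ_gt[of a] next_occ_gt[of b] a2 b2 by auto
  then show False using last_letters_differ last_letters_not_01 last_letters_not_10 by auto
qed

end

theorem sturmian_balanced:
  assumes "binary_word w" "sturmian_word w"
  shows "balanced w"
proof (rule ccontr)
  assume "\<not> balanced w"
  then obtain a b n where "a \<ge> 2" "b \<ge> 2" "w (a - 1) = 1" "w (a + n) = 1" "w (b - 1) = 0" "w (b + n) = 0"
    "factor_at w a n = factor_at w b n"
    using unbalanced_witness[OF assms(1)] by blast
  then interpret unbalanced_sturmian w a b n using assms by unfold_locales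
  show False by (rule impossible)
qed

section \<open>Uniform lower density of ones\<close>

definition uniform_lower_slope :: "(nat \<Rightarrow> nat) \<Rightarrow> real \<Rightarrow> bool" where
  "uniform_lower_slope w \<alpha> \<longleftrightarrow> (\<forall>\<delta>>0. \<exists>l0. \<forall>l\<ge>l0. \<forall>i\<ge>1. (\<alpha> - \<delta>) * real l \<le> real (weight w i l))"

lemma sum_prefix_eq_weight: "(\<Sum>i=1..N. real (w i)) = real (weight w 1 N)"
  unfolding weight_def by (simp add: sum.atLeast1_atMost_eq)

lemma weight_mult: "weight w i (k * l) = (\<Sum>j<k. weight w (i + j * l) l)"
proof (induct k)
  case (Suc k)
  have "weight w i (Suc k * l) = weight w i (k * l + l)" by (simp add: add.commute)
  also have "\<dots> = weight w i (k * l) + weight w (i + k * l) l" by (rule weight_add)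
  finally show ?case using Suc by simp
qed simp

lemma slope_along_multiples:
  assumes "has_slope w \<alpha>" "l \<ge> 1"
  shows "(\<lambda>k. real (weight w 1 ((k+1) * l)) / real ((k+1) * l)) \<longlonglongrightarrow> \<alpha>"
proof -
  have sm: "strict_mono (\<lambda>k::nat. (k+1) * l)" unfolding strict_mono_def using assms(2) by simp
  have "(\<lambda>n. (\<Sum>i=1..n. real (w i)) / real n) \<longlonglongrightarrow> \<alpha>" using assms(1) unfolding has_slope_def .
  from LIMSEQ_subseq_LIMSEQ[OF this sm] show ?thesis unfolding o_def sum_prefix_eq_weight .
qed

lemma uniform_lower_slope_if_bounded_deficit:
  assumes deficit: "\<And>l i. l \<ge> 1 \<Longrightarrow> i \<ge> 1 \<Longrightarrow> \<alpha> * real l \<le> real (weight w i l) + C"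
  shows "uniform_lower_slope w \<alpha>"
  unfolding uniform_lower_slope_def
proof (intro allI impI)
  fix \<delta> :: real assume d: "\<delta> > 0"
  obtain l0 :: nat where l0: "real l0 \<ge> C / \<delta>" using real_arch_simple by blast
  show "\<exists>l0. \<forall>l\<ge>l0. \<forall>i\<ge>1. (\<alpha> - \<delta>) * real l \<le> real (weight w i l)"
  proof (intro exI[of _ "l0 + 1"] allI impI)
    fix l i :: nat assume l: "l \<ge> l0 + 1" and i: "i \<ge> 1"
    have "real l \<ge> C / \<delta>" using l l0 by simp
    then have "\<delta> * real l \<ge> C" using d by (simp add: field_simps)
    then show "(\<alpha> - \<delta>) * real l \<le> real (weight w i l)" using deficit[of l i] l i by (simp add: algebra_simps)
  qed
qed

lemma balanced_slope_deficit:
  assumes bal: "balanced w" and sl: "has_slope w \<alpha>" and l1: "l \<ge> 1" and i: "i \<ge> 1"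
  shows "\<alpha> * real l \<le> real (weight w i l) + 1"
proof -
  have bound: "real (weight w 1 ((k + 1) * l)) / real ((k + 1) * l) \<le> (real (weight w i l) + 1) / real l" for k
  proof -
    have "weight w 1 ((k + 1) * l) = (\<Sum>j<k + 1. weight w (1 + j * l) l)" by (rule weight_mult)
    also have "\<dots> \<le> (\<Sum>j<k + 1. weight w i l + 1)"
      by (rule sum_mono) (use bal i in \<open>auto simp: balanced_def\<close>)
    also have "\<dots> = (k + 1) * (weight w i l + 1)" by simp
    finally have "real (weight w 1 ((k + 1) * l)) \<le> real ((k + 1) * (weight w i l + 1))"
      by (simp only: of_nat_le_iff)
    then have "real (weight w 1 ((k + 1) * l)) \<le> real (k + 1) * (real (weight w i l) + 1)"
      by (simp add: algebra_simps)
    moreover have "real ((k + 1) * l) = real (k + 1) * real l" by (simp only: of_nat_mult)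
    moreover have "real (k + 1) > 0" "real l > 0" using l1 by auto
    ultimately show ?thesis
      by (metis divide_right_mono mult_pos_pos less_imp_le nonzero_mult_divide_mult_cancel_left less_irrefl)
  qed
  have "\<alpha> \<le> (real (weight w i l) + 1) / real l"
    by (rule LIMSEQ_le_const2[OF slope_along_multiples[OF sl l1]]) (use bound in auto)
  then show ?thesis using l1 by (simp add: field_simps)
qed

lemma balanced_uniform_lower_slope:
  assumes "balanced w" "has_slope w \<alpha>"
  shows "uniform_lower_slope w \<alpha>"
  using balanced_slope_deficit[OF assms] by (rule uniform_lower_slope_if_bounded_deficit)

lemma periodic_weight:
  assumes p: "\<forall>i\<ge>1. w (i + p) = w i" and i: "i \<ge> 1"
  shows "weight w i (k * p) = k * weight w 1 p"
proof -
  have block: "weight w j p = weight w 1 p" if "j \<ge> 1" for j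
    using that
  proof (induction j rule: dec_induct)
    case (step j)
    have "weight w j (Suc p) = w j + weight w (Suc j) p" by (rule weight_Suc_left)
    moreover have "weight w j (Suc p) = weight w j p + w (j + p)" by (rule weight_Suc_right)
    ultimately show ?case using p step by simp
  qed simp
  have "weight w (i + j * p) p = weight w 1 p" for j using i by (intro block) simp
  then show ?thesis unfolding weight_mult by simp
qed

lemma periodic_uniform_lower_slope:
  assumes bin: "binary_word w" and per: "periodic_word w" and sl: "has_slope w \<alpha>"
  shows "uniform_lower_slope w \<alpha>"
proof -
  obtain p where p: "p \<ge> 1" "\<forall>i\<ge>1. w (i + p) = w i" using per unfolding periodic_word_def by blast
  define S where "S = weight w 1 p"
  have "(\<lambda>k. real (weight w 1 ((k + 1) * p)) / real ((k + 1) * p)) = (\<lambda>k. real S / real p)"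
  proof
    fix k
    have "real (weight w 1 ((k + 1) * p)) = real (k + 1) * real S"
      using periodic_weight[OF p(2), of 1 "k + 1"] unfolding S_def by (simp add: algebra_simps)
    then show "real (weight w 1 ((k + 1) * p)) / real ((k + 1) * p) = real S / real p"
      by (simp only: of_nat_mult) simp
  qed
  then have "(\<lambda>k. real S / real p) \<longlonglongrightarrow> \<alpha>" using slope_along_multiples[OF sl p(1)] by simp
  then have \<alpha>: "\<alpha> = real S / real p" using LIMSEQ_unique tendsto_const by blast
  have "S \<le> p" unfolding S_def by (rule weight_le[OF bin]) simp
  then have \<alpha>01: "0 \<le> \<alpha>" "\<alpha> \<le> 1" unfolding \<alpha> using p(1) by (simp_all add: divide_le_eq)
  show ?thesis
  proof (rule uniform_lower_slope_if_bounded_deficit)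
    fix l i :: nat assume i: "i \<ge> 1"
    define k where "k = l div p"
    have "weight w i l = weight w i (k * p) + weight w (i + k * p) (l - k * p)"
      using weight_add[of w i "k * p" "l - k * p"] unfolding k_def by simp
    then have ge: "real (weight w i l) \<ge> real k * real S" using periodic_weight[OF p(2) i, of k] S_def by simp
    have "l < (k + 1) * p" unfolding k_def using p(1) by (simp add: dividend_less_div_times)
    then have "real l \<le> real ((k + 1) * p)" by (simp only: of_nat_le_iff less_imp_le)
    then have "real l \<le> (real k + 1) * real p" by (simp add: algebra_simps)
    then have "\<alpha> * real l \<le> \<alpha> * ((real k + 1) * real p)" using \<alpha>01 by (simp add: mult_left_mono)
    also have "\<dots> = real k * real S + \<alpha> * real p" using \<alpha> p(1) by (simp add: field_simps)
    also have "\<dots> \<le> real k * real S + real p" using \<alpha>01 by (simp add: mult_left_le_one_le)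
    finally show "\<alpha> * real l \<le> real (weight w i l) + real p" using ge by simp
  qed
qed

section \<open>Right multiplication by \<open>a\<close> and \<open>b\<close>\<close>

definition mult_a :: "nat \<Rightarrow> (nat \<Rightarrow> nat) \<Rightarrow> (bidx \<Rightarrow> 'a::field) \<Rightarrow> bidx \<Rightarrow> 'a" where
  "mult_a m w u e = (case e of Bz i j \<Rightarrow> if 1 \<le> j \<and> j \<le> m + w i then u (Bz i (j - 1)) else 0 | _ \<Rightarrow> 0)"

definition mult_b :: "nat \<Rightarrow> (nat \<Rightarrow> nat) \<Rightarrow> (bidx \<Rightarrow> 'a::field) \<Rightarrow> bidx \<Rightarrow> 'a" where
  "mult_b m w u e = (case e of Bz i j \<Rightarrow> if j = 1 \<and> 1 \<le> i then u (Bz (i - 1) (m + w (i - 1))) else 0 | _ \<Rightarrow> 0)"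

lemma bprod_Ba: "bprod m w b1 Ba = Some e \<longleftrightarrow>
   (case e of Bz i j \<Rightarrow> 1 \<le> j \<and> j \<le> m + w i \<and> b1 = Bz i (j - 1) | _ \<Rightarrow> False)"
  by (cases b1; cases e) auto

lemma bprod_Bb: "bprod m w b1 Bb = Some e \<longleftrightarrow>
   (case e of Bz i j \<Rightarrow> j = 1 \<and> 1 \<le> i \<and> b1 = Bz (i - 1) (m + w (i - 1)) | _ \<Rightarrow> False)"
  by (cases b1; cases e) auto

lemma bprod_other: "b2 \<noteq> Ba \<Longrightarrow> b2 \<noteq> Bb \<Longrightarrow> bprod m w b1 b2 = None"
  by (cases b1; cases b2) auto

lemma sum_supported_Ba_Bb:
  assumes "finite X" "\<And>b. b \<notin> X \<Longrightarrow> h b = 0" "\<And>b. b \<noteq> Ba \<Longrightarrow> b \<noteq> Bb \<Longrightarrow> h b = 0"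
  shows "sum h X = h Ba + h Bb"
proof -
  have "sum h X = sum h (X \<union> {Ba, Bb})"
    by (rule sum.mono_neutral_left) (use assms in auto)
  also have "\<dots> = sum h {Ba, Bb}"
    by (rule sum.mono_neutral_right) (use assms in auto)
  finally show ?thesis by simp
qed

lemma sum_if_eq:
  fixes u :: "bidx \<Rightarrow> 'a::field"
  assumes "finite U" "\<And>b. b \<notin> U \<Longrightarrow> u b = 0"
  shows "(\<Sum>b\<in>U. if b = c then u b * y else 0) = u c * y"
proof -
  have "(\<Sum>b\<in>U. if b = c then u b * y else 0) = (if c \<in> U then u c * y else 0)"
    using assms(1) by (simp add: sum.delta)
  then show ?thesis using assms(2) by auto
qed

lemma sum_bprod_Ba:
  fixes u :: "bidx \<Rightarrow> 'a::field"
  assumes "finite U" "\<And>b. b \<notin> U \<Longrightarrow> u b = 0"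
  shows "(\<Sum>b1\<in>U. if bprod m w b1 Ba = Some e then u b1 * y else 0) = y * mult_a m w u e"
proof (cases "\<exists>i j. e = Bz i j \<and> 1 \<le> j \<and> j \<le> m + w i")
  case True
  then obtain i j where e: "e = Bz i j" "1 \<le> j" "j \<le> m + w i" by blast
  have "(\<Sum>b1\<in>U. if bprod m w b1 Ba = Some e then u b1 * y else 0)
      = (\<Sum>b1\<in>U. if b1 = Bz i (j - 1) then u b1 * y else 0)"
    by (rule sum.cong) (use e in \<open>auto simp: bprod_Ba\<close>)
  also have "\<dots> = u (Bz i (j - 1)) * y" by (rule sum_if_eq) (use assms in auto)
  finally show ?thesis using e by (simp add: mult_a_def)
next
  case False
  then have "\<forall>b1. bprod m w b1 Ba \<noteq> Some e" by (auto simp: bprod_Ba split: bidx.splits)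
  then show ?thesis using False by (auto simp: mult_a_def split: bidx.splits)
qed

lemma sum_bprod_Bb:
  fixes u :: "bidx \<Rightarrow> 'a::field"
  assumes "finite U" "\<And>b. b \<notin> U \<Longrightarrow> u b = 0"
  shows "(\<Sum>b1\<in>U. if bprod m w b1 Bb = Some e then u b1 * y else 0) = y * mult_b m w u e"
proof (cases "\<exists>i. e = Bz i 1 \<and> 1 \<le> i")
  case True
  then obtain i where e: "e = Bz i 1" "1 \<le> i" by blast
  have "(\<Sum>b1\<in>U. if bprod m w b1 Bb = Some e then u b1 * y else 0)
      = (\<Sum>b1\<in>U. if b1 = Bz (i - 1) (m + w (i - 1)) then u b1 * y else 0)"
    by (rule sum.cong) (use e in \<open>auto simp: bprod_Bb\<close>)
  also have "\<dots> = u (Bz (i - 1) (m + w (i - 1))) * y" by (rule sum_if_eq) (use assms in auto)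
  finally show ?thesis using e by (simp add: mult_b_def)
next
  case False
  then have "\<forall>b1. bprod m w b1 Bb \<noteq> Some e" by (auto simp: bprod_Bb split: bidx.splits)
  then show ?thesis using False by (auto simp: mult_b_def split: bidx.splits)
qed

lemma A_mult_eq_mult_a_mult_b:
  fixes u x :: "bidx \<Rightarrow> 'a::field"
  assumes fu: "finite {b. u b \<noteq> 0}" and fx: "finite {b. x b \<noteq> 0}"
  shows "A_mult m w u x e = x Ba * mult_a m w u e + x Bb * mult_b m w u e"
proof -
  define U where "U = {b. u b \<noteq> 0}"
  have inner: "(\<Sum>b2\<in>{b. x b \<noteq> 0}. if bprod m w b1 b2 = Some e then u b1 * x b2 else 0) =
      (if bprod m w b1 Ba = Some e then u b1 * x Ba else 0) + (if bprod m w b1 Bb = Some e then u b1 * x Bb else 0)"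
    for b1
    by (rule sum_supported_Ba_Bb) (use fx bprod_other in auto)
  have U: "finite U" "\<And>b. b \<notin> U \<Longrightarrow> u b = 0" using fu unfolding U_def by auto
  have "A_mult m w u x e = (\<Sum>b1\<in>U. (if bprod m w b1 Ba = Some e then u b1 * x Ba else 0)
      + (if bprod m w b1 Bb = Some e then u b1 * x Bb else 0))"
    unfolding A_mult_def U_def[symmetric] using inner by simp
  also have "\<dots> = (\<Sum>b1\<in>U. if bprod m w b1 Ba = Some e then u b1 * x Ba else 0)
      + (\<Sum>b1\<in>U. if bprod m w b1 Bb = Some e then u b1 * x Bb else 0)"
    by (rule sum.distrib)
  also have "\<dots> = x Ba * mult_a m w u e + x Bb * mult_b m w u e"
    using sum_bprod_Ba[where U = U and u = u, OF U] sum_bprod_Bb[where U = U and u = u, OF U] by simp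
  finally show ?thesis .
qed

lemma A_mult_Ba: "A_mult m w u x Ba = 0" and A_mult_Bb: "A_mult m w u x Bb = 0"
proof -
  have "bprod m w b1 b2 \<noteq> Some Ba" "bprod m w b1 b2 \<noteq> Some Bb" for b1 b2
    by (cases b1; cases b2; auto)+
  then show "A_mult m w u x Ba = 0" "A_mult m w u x Bb = 0" unfolding A_mult_def by simp_all
qed

lemma A_mult_zero_right:
  assumes "x Ba = 0" "x Bb = 0"
  shows "A_mult m w u x e = 0"
proof -
  have "(if bprod m w b1 b2 = Some e then u b1 * x b2 else 0) = 0" for b1 b2
    using assms bprod_other[of b2 m w b1] by (cases "b2 = Ba \<or> b2 = Bb") auto
  then show ?thesis unfolding A_mult_def by simp
qed

lemma finite_A_mult_support: "finite {e. A_mult m w u x e \<noteq> 0}"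
proof (cases "finite {b. u b \<noteq> 0} \<and> finite {b. x b \<noteq> 0}")
  case True
  then have F: "finite ({b. u b \<noteq> 0} \<times> {b. x b \<noteq> 0})" by simp
  have "{e. A_mult m w u x e \<noteq> 0} \<subseteq> (\<lambda>(b1, b2). the (bprod m w b1 b2)) ` ({b. u b \<noteq> 0} \<times> {b. x b \<noteq> 0})"
  proof
    fix e assume "e \<in> {e. A_mult m w u x e \<noteq> 0}"
    then have "A_mult m w u x e \<noteq> 0" by simp
    have "\<exists>b1\<in>{b. u b \<noteq> 0}. \<exists>b2\<in>{b. x b \<noteq> 0}. bprod m w b1 b2 = Some e"
    proof (rule ccontr)
      assume N: "\<not> ?thesis"
      have "A_mult m w u x e = 0" unfolding A_mult_def
        by (rule sum.neutral, rule ballI, rule sum.neutral) (use N in auto)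
      then show False using \<open>A_mult m w u x e \<noteq> 0\<close> by simp
    qed
    then obtain b1 b2 where "u b1 \<noteq> 0" "x b2 \<noteq> 0" "bprod m w b1 b2 = Some e" by blast
    then show "e \<in> (\<lambda>(b1, b2). the (bprod m w b1 b2)) ` ({b. u b \<noteq> 0} \<times> {b. x b \<noteq> 0})"
      by (intro image_eqI[of _ _ "(b1, b2)"]) auto
  qed
  then show ?thesis using F finite_subset by blast
next
  case False
  then have "A_mult m w u x e = 0" for e unfolding A_mult_def by auto
  then show ?thesis by simp
qed

text \<open>Words in \<open>a, b\<close> are encoded as \<open>bool list\<close>s, \<open>True\<close> standing for \<open>a\<close>; \<open>path_nonzero m w i j ps\<close>
  holds iff \<open>z_j^(i) ps \<noteq> 0\<close>.\<close>

fun path_nonzero :: "nat \<Rightarrow> (nat \<Rightarrow> nat) \<Rightarrow> nat \<Rightarrow> nat \<Rightarrow> bool list \<Rightarrow> bool" where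
  "path_nonzero m w i j [] = True"
| "path_nonzero m w i j (b # ps) = (if b then j < m + w i \<and> path_nonzero m w i (Suc j) ps
                            else j = m + w i \<and> path_nonzero m w (Suc i) 1 ps)"

definition z_index :: "nat \<Rightarrow> (nat \<Rightarrow> nat) \<Rightarrow> nat \<Rightarrow> nat \<Rightarrow> bool" where
  "z_index m w i j \<longleftrightarrow> 1 \<le> i \<and> 1 \<le> j \<and> j \<le> m + w i"

definition mult_letter :: "nat \<Rightarrow> (nat \<Rightarrow> nat) \<Rightarrow> bool \<Rightarrow> (bidx \<Rightarrow> 'a::field) \<Rightarrow> bidx \<Rightarrow> 'a" where
  "mult_letter m w b u = (if b then mult_a m w u else mult_b m w u)"

fun mult_word :: "nat \<Rightarrow> (nat \<Rightarrow> nat) \<Rightarrow> (bidx \<Rightarrow> 'a::field) \<Rightarrow> bool list \<Rightarrow> bidx \<Rightarrow> 'a" where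
  "mult_word m w u [] = u"
| "mult_word m w u (b # ps) = mult_word m w (mult_letter m w b u) ps"

lemma mult_word_snoc: "mult_word m w u (ps @ [b]) = mult_letter m w b (mult_word m w u ps)"
  by (induct ps arbitrary: u) auto

lemma mult_letter_scale: "mult_letter m w b (\<lambda>e. c * f e) e = c * mult_letter m w b f e"
  by (cases e) (auto simp: mult_letter_def mult_a_def mult_b_def)

definition basis_supported :: "nat \<Rightarrow> (nat \<Rightarrow> nat) \<Rightarrow> (bidx \<Rightarrow> 'a::field) \<Rightarrow> bool" where
  "basis_supported m w u \<longleftrightarrow> (\<forall>b. u b \<noteq> 0 \<longrightarrow> valid_idx m w b)"

lemma basis_supported_mult_letter:
  assumes "m \<ge> 1" "basis_supported m w u"
  shows "basis_supported m w (mult_letter m w b u)"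
  unfolding basis_supported_def
proof (intro allI impI)
  fix e assume ne: "mult_letter m w b u e \<noteq> 0"
  show "valid_idx m w e"
  proof (cases e)
    case (Bz i j)
    show ?thesis
    proof (cases b)
      case True
      then have "1 \<le> j" "j \<le> m + w i" "u (Bz i (j - 1)) \<noteq> 0" using ne Bz by (auto simp: mult_letter_def mult_a_def split: if_splits)
      then have "1 \<le> i" using assms(2) unfolding basis_supported_def valid_idx_def by fastforce
      then show ?thesis using Bz \<open>1 \<le> j\<close> \<open>j \<le> m + w i\<close> by (simp add: valid_idx_def)
    next
      case False
      then have "j = 1" "1 \<le> i" using ne Bz by (auto simp: mult_letter_def mult_b_def split: if_splits)
      then show ?thesis using Bz assms(1) by (simp add: valid_idx_def)
    qed
  qed (auto simp: valid_idx_def)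
qed

lemma mult_letter_nonzero_pred:
  assumes "basis_supported m w u" "mult_letter m w b u (Bz i j) \<noteq> 0"
  shows "\<exists>i' j'. z_index m w i' j' \<and> u (Bz i' j') \<noteq> 0 \<and> (\<forall>ps. path_nonzero m w i' j' (b # ps) = path_nonzero m w i j ps)"
proof (cases b)
  case True
  then have h: "1 \<le> j" "j \<le> m + w i" "u (Bz i (j - 1)) \<noteq> 0" using assms(2) by (auto simp: mult_letter_def mult_a_def split: if_splits)
  then have "valid_idx m w (Bz i (j - 1))" using assms(1) unfolding basis_supported_def by blast
  then have "z_index m w i (j - 1)" unfolding valid_idx_def z_index_def by simp
  moreover have "\<forall>ps. path_nonzero m w i (j - 1) (b # ps) = path_nonzero m w i j ps" using True h by auto
  ultimately show ?thesis using h by blast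
next
  case False
  then have h: "j = 1" "1 \<le> i" "u (Bz (i - 1) (m + w (i - 1))) \<noteq> 0" using assms(2) by (auto simp: mult_letter_def mult_b_def split: if_splits)
  then have "valid_idx m w (Bz (i - 1) (m + w (i - 1)))" using assms(1) unfolding basis_supported_def by blast
  then have "z_index m w (i - 1) (m + w (i - 1))" unfolding valid_idx_def z_index_def by simp
  moreover have "\<forall>ps. path_nonzero m w (i - 1) (m + w (i - 1)) (b # ps) = path_nonzero m w i j ps" using False h by auto
  ultimately show ?thesis using h by blast
qed

lemma mult_letter_nonzero_Bz: "mult_letter m w b u e \<noteq> 0 \<Longrightarrow> \<exists>i j. e = Bz i j"
  by (cases e; cases b) (auto simp: mult_letter_def mult_a_def mult_b_def)

lemma mult_word_nonzero_source:
  assumes "m \<ge> 1" "basis_supported m w u" "ps \<noteq> []" "mult_word m w u ps e \<noteq> 0"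
  shows "\<exists>i j. z_index m w i j \<and> u (Bz i j) \<noteq> 0 \<and> path_nonzero m w i j ps"
  using assms(2-4)
proof (induct ps arbitrary: u)
  case Nil then show ?case by simp
next
  case (Cons b ps)
  have v: "basis_supported m w (mult_letter m w b u)" using basis_supported_mult_letter[OF assms(1) Cons.prems(1)] .
  show ?case
  proof (cases "ps = []")
    case True
    then have ne: "mult_letter m w b u e \<noteq> 0" using Cons.prems by simp
    then obtain i j where e: "e = Bz i j" using mult_letter_nonzero_Bz by blast
    from mult_letter_nonzero_pred[OF Cons.prems(1), of b i j] ne e obtain i' j' where
      "z_index m w i' j'" "u (Bz i' j') \<noteq> 0" "\<forall>ps. path_nonzero m w i' j' (b # ps) = path_nonzero m w i j ps" by auto
    then show ?thesis using True by (intro exI[of _ i'] exI[of _ j']) auto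
  next
    case False
    then obtain i j where ij: "z_index m w i j" "mult_letter m w b u (Bz i j) \<noteq> 0" "path_nonzero m w i j ps"
      using Cons.hyps[OF v] Cons.prems by auto
    from mult_letter_nonzero_pred[OF Cons.prems(1) ij(2)] obtain i' j' where
      "z_index m w i' j'" "u (Bz i' j') \<noteq> 0" "\<forall>ps. path_nonzero m w i' j' (b # ps) = path_nonzero m w i j ps" by auto
    then show ?thesis using ij(3) by (intro exI[of _ i'] exI[of _ j']) auto
  qed
qed

lemma mult_word_nonzero_path:
  assumes "m \<ge> 1" "basis_supported m w u" "mult_word m w u ps e \<noteq> 0"
  shows "\<exists>i j. z_index m w i j \<and> path_nonzero m w i j ps"
proof (cases "ps = []")
  case True
  have "z_index m w 1 1" using assms(1) unfolding z_index_def by simp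
  then show ?thesis using True by auto
next
  case False
  then show ?thesis using mult_word_nonzero_source[OF assms(1,2) False assms(3)] by blast
qed

section \<open>Evaluation of multilinear monomials\<close>

fun left_normed :: "mon \<Rightarrow> (nat \<times> nat list) option" where
  "left_normed (Var v) = Some (v, [])"
| "left_normed (Mul t (Var v)) = map_option (\<lambda>(v1, vs). (v1, vs @ [v])) (left_normed t)"
| "left_normed (Mul t (Mul t1 t2)) = None"

lemma left_normed_leaves: "left_normed t = Some (v1, vs) \<Longrightarrow> leaves t = v1 # vs"
proof (induct t arbitrary: v1 vs rule: left_normed.induct)
  case (2 t v)
  then obtain vs' where "left_normed t = Some (v1, vs')" "vs = vs' @ [v]" by auto
  then show ?case using 2 by simp
qed auto

lemma eval_mon_not_left_normed: "left_normed t = None \<Longrightarrow> eval_mon m w t s = (\<lambda>e. 0)"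
proof (induct t rule: left_normed.induct)
  case (2 t v)
  then have "eval_mon m w t s = (\<lambda>e. 0)" by simp
  then show ?case by (simp add: A_mult_def fun_eq_iff)
next
  case (3 t t1 t2)
  show ?case by (simp add: fun_eq_iff A_mult_zero_right A_mult_Ba A_mult_Bb)
qed auto

lemma finite_eval_mon_support:
  assumes "\<forall>v\<in>set (leaves t). finite {b. s v b \<noteq> 0}"
  shows "finite {b. eval_mon m w t s b \<noteq> 0}"
  using assms by (cases t) (auto simp: finite_A_mult_support)

definition letter_coeff :: "(nat \<Rightarrow> bidx \<Rightarrow> 'a::field) \<Rightarrow> nat \<Rightarrow> nat \<Rightarrow> 'a" where
  "letter_coeff s k v = (if v < k then s v Ba else s v Bb)"

lemma finite_graded_subst_support:
  "graded_subst m w k n s \<Longrightarrow> v < n \<Longrightarrow> finite {b. s v b \<noteq> 0}"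
  unfolding graded_subst_def A_even_def A_odd_def A_elem_def by (cases "v < k") auto

lemma A_mult_graded_subst:
  assumes gs: "graded_subst m w k n s" and v: "v < n" and fu: "finite {b. u b \<noteq> 0}"
  shows "A_mult m w u (s v) e = letter_coeff s k v * mult_letter m w (v < k) u e"
proof (cases "v < k")
  case True
  then have "A_even m w (s v)" using gs v unfolding graded_subst_def by auto
  then have "s v Bb = 0" unfolding A_even_def by auto
  then show ?thesis using True A_mult_eq_mult_a_mult_b[OF fu finite_graded_subst_support[OF gs v]]
    by (simp add: letter_coeff_def mult_letter_def)
next
  case False
  then have "A_odd m w (s v)" using gs v unfolding graded_subst_def by auto
  then have "s v Ba = 0" unfolding A_odd_def by auto
  then show ?thesis using False A_mult_eq_mult_a_mult_b[OF fu finite_graded_subst_support[OF gs v]]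
    by (simp add: letter_coeff_def mult_letter_def)
qed

lemma eval_mon_left_normed:
  assumes gs: "graded_subst m w k n s"
  shows "left_normed t = Some (v1, vs) \<Longrightarrow> set (v1 # vs) \<subseteq> {..<n} \<Longrightarrow>
    eval_mon m w t s = (\<lambda>e. prod_list (map (letter_coeff s k) vs) * mult_word m w (s v1) (map (\<lambda>v. v < k) vs) e)"
proof (induct t arbitrary: v1 vs rule: left_normed.induct)
  case (1 v)
  then show ?case by (simp add: fun_eq_iff)
next
  case (2 t v)
  then obtain vs' where t: "left_normed t = Some (v1, vs')" and vs: "vs = vs' @ [v]" by auto
  have vn: "v < n" "set (v1 # vs') \<subseteq> {..<n}" using 2(3) vs by auto
  define P where "P = prod_list (map (letter_coeff s k) vs')"
  define W where "W = mult_word m w (s v1) (map (\<lambda>v. v < k) vs')"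
  have ih: "eval_mon m w t s = (\<lambda>e. P * W e)" unfolding P_def W_def using 2(1)[OF t vn(2)] .
  have fin: "finite {b. eval_mon m w t s b \<noteq> 0}"
    by (rule finite_eval_mon_support) (use left_normed_leaves[OF t] vn finite_graded_subst_support[OF gs] in auto)
  show ?case
  proof
    fix e
    have "eval_mon m w (Mul t (Var v)) s e = letter_coeff s k v * mult_letter m w (v < k) (\<lambda>e. P * W e) e"
      using A_mult_graded_subst[OF gs vn(1) fin] ih by simp
    also have "\<dots> = prod_list (map (letter_coeff s k) vs) * mult_word m w (s v1) (map (\<lambda>v. v < k) vs) e"
      unfolding vs P_def W_def by (simp add: mult_letter_scale mult_word_snoc)
    finally show "eval_mon m w (Mul t (Var v)) s e =
        prod_list (map (letter_coeff s k) vs) * mult_word m w (s v1) (map (\<lambda>v. v < k) vs) e" .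
  qed
next
  case (3 t t1 t2)
  then show ?case by simp
qed

lemma leaves_not_Nil: "leaves t \<noteq> []"
  by (induct t) auto

lemma finite_mons_bounded: "finite {t. length (leaves t) \<le> N \<and> set (leaves t) \<subseteq> A}" if "finite A" for A
proof (induct N)
  case 0 then show ?case using leaves_not_Nil by simp
next
  case (Suc N)
  let ?T = "{t. length (leaves t) \<le> N \<and> set (leaves t) \<subseteq> A}"
  have "{t. length (leaves t) \<le> Suc N \<and> set (leaves t) \<subseteq> A} \<subseteq> Var ` A \<union> (\<lambda>(x, y). Mul x y) ` (?T \<times> ?T)"
  proof
    fix t assume t: "t \<in> {t. length (leaves t) \<le> Suc N \<and> set (leaves t) \<subseteq> A}"
    show "t \<in> Var ` A \<union> (\<lambda>(x, y). Mul x y) ` (?T \<times> ?T)"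
    proof (cases t)
      case (Var v) then show ?thesis using t by auto
    next
      case (Mul x y)
      have "leaves x \<noteq> []" "leaves y \<noteq> []" using leaves_not_Nil by auto
      then have "length (leaves x) \<ge> 1" "length (leaves y) \<ge> 1" by (auto simp: Suc_le_eq)
      then have "x \<in> ?T" "y \<in> ?T" using t Mul by auto
      then show ?thesis using Mul by (auto intro!: image_eqI[of _ _ "(x, y)"])
    qed
  qed
  moreover have "finite (Var ` A \<union> (\<lambda>(x, y). Mul x y) ` (?T \<times> ?T))" using Suc that by simp
  ultimately show ?case using finite_subset by blast
qed

lemma finite_multilin_mons: "finite (multilin_mons n)"
proof -
  have "multilin_mons n \<subseteq> {t. length (leaves t) \<le> n \<and> set (leaves t) \<subseteq> {..<n}}"
    unfolding multilin_mons_def using distinct_card by fastforce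
  then show ?thesis using finite_mons_bounded[of "{..<n}" n] finite_subset by blast
qed

section \<open>Bounding the graded codimensions\<close>

definition left_normed_mons :: "nat \<Rightarrow> mon set" where
  "left_normed_mons n = {t \<in> multilin_mons n. left_normed t \<noteq> None}"

definition word_key :: "nat \<Rightarrow> mon \<Rightarrow> nat \<times> bool list" where
  "word_key k t = (case left_normed t of Some (v1, vs) \<Rightarrow> (v1, map (\<lambda>v. v < k) vs) | None \<Rightarrow> (0, []))"

definition nonzero_words :: "nat \<Rightarrow> (nat \<Rightarrow> nat) \<Rightarrow> nat \<Rightarrow> bool list set" where
  "nonzero_words m w L = {pat. length pat = L \<and> (\<exists>i j. z_index m w i j \<and> path_nonzero m w i j pat)}"

definition relevant_keys :: "nat \<Rightarrow> (nat \<Rightarrow> nat) \<Rightarrow> nat \<Rightarrow> nat \<Rightarrow> (nat \<times> bool list) set" where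
  "relevant_keys m w k n = {\<kappa> \<in> word_key k ` left_normed_mons n. snd \<kappa> \<in> nonzero_words m w (n - 1)}"

definition key_coeffs :: "nat \<Rightarrow> (nat \<Rightarrow> nat) \<Rightarrow> nat \<Rightarrow> nat \<Rightarrow> (mon \<Rightarrow> 'a::field) \<Rightarrow> nat \<times> bool list \<Rightarrow> 'a" where
  "key_coeffs m w k n p \<kappa> = (if \<kappa> \<in> relevant_keys m w k n then (\<Sum>t\<in>{t \<in> left_normed_mons n. word_key k t = \<kappa>}. p t) else 0)"

lemma finite_left_normed_mons: "finite (left_normed_mons n)" unfolding left_normed_mons_def using finite_multilin_mons by simp

lemma finite_relevant_keys: "finite (relevant_keys m w k n)" unfolding relevant_keys_def using finite_left_normed_mons by simp

lemma left_normed_monsE: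
  assumes "t \<in> left_normed_mons n"
  obtains v1 vs where "left_normed t = Some (v1, vs)" "distinct (v1 # vs)" "set (v1 # vs) = {..<n}"
    "word_key k t = (v1, map (\<lambda>v. v < k) vs)"
proof -
  obtain v1 vs where l: "left_normed t = Some (v1, vs)" using assms unfolding left_normed_mons_def by auto
  then have "leaves t = v1 # vs" by (rule left_normed_leaves)
  then show ?thesis using that l assms unfolding left_normed_mons_def multilin_mons_def word_key_def by auto
qed

definition key_value ::
    "nat \<Rightarrow> (nat \<Rightarrow> nat) \<Rightarrow> nat \<Rightarrow> nat \<Rightarrow> (nat \<Rightarrow> bidx \<Rightarrow> 'a::field) \<Rightarrow> bidx \<Rightarrow> nat \<times> bool list \<Rightarrow> 'a" where
  "key_value m w k n s e \<kappa> =
     (\<Prod>v\<in>{..<n} - {fst \<kappa>}. letter_coeff s k v) * mult_word m w (s (fst \<kappa>)) (snd \<kappa>) e"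

lemma eval_mon_eq_key_value:
  assumes gs: "graded_subst m w k n s" and t: "t \<in> left_normed_mons n"
  shows "eval_mon m w t s e = key_value m w k n s e (word_key k t)"
proof -
  obtain v1 vs where d: "left_normed t = Some (v1, vs)" "distinct (v1 # vs)" "set (v1 # vs) = {..<n}"
    "word_key k t = (v1, map (\<lambda>v. v < k) vs)" using left_normed_monsE[OF t] by blast
  have "eval_mon m w t s e = prod_list (map (letter_coeff s k) vs) * mult_word m w (s v1) (map (\<lambda>v. v < k) vs) e"
  proof -
    have "set (v1 # vs) \<subseteq> {..<n}" using d(3) by simp
    from eval_mon_left_normed[OF gs d(1) this] show ?thesis by simp
  qed
  moreover have "prod_list (map (letter_coeff s k) vs) = (\<Prod>v\<in>set vs. letter_coeff s k v)"
    using d(2) by (simp add: prod.distinct_set_conv_list)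
  moreover have "set vs = {..<n} - {v1}" using d(2,3) by auto
  ultimately show ?thesis unfolding key_value_def d(4) by simp
qed

lemma key_value_irrelevant:
  assumes m1: "m \<ge> 1" and gs: "graded_subst m w k n s"
    and \<kappa>: "\<kappa> \<in> word_key k ` left_normed_mons n" "\<kappa> \<notin> relevant_keys m w k n"
  shows "key_value m w k n s e \<kappa> = 0"
proof -
  have not_nonzero: "snd \<kappa> \<notin> nonzero_words m w (n - 1)" using \<kappa> unfolding relevant_keys_def by auto
  obtain t where t: "t \<in> left_normed_mons n" "\<kappa> = word_key k t" using \<kappa>(1) by auto
  obtain v1 vs where d: "left_normed t = Some (v1, vs)" "distinct (v1 # vs)" "set (v1 # vs) = {..<n}"
    "word_key k t = (v1, map (\<lambda>v. v < k) vs)" using left_normed_monsE[OF t(1)] by blast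
  have "length vs = n - 1" using d(2,3) distinct_card by fastforce
  then have len: "length (snd \<kappa>) = n - 1" using t d by simp
  have "v1 < n" using d(3) by auto
  then have "A_elem m w (s v1)"
    using gs unfolding graded_subst_def A_even_def A_odd_def by (cases "v1 < k") auto
  then have supp: "basis_supported m w (s (fst \<kappa>))"
    using t d unfolding A_elem_def basis_supported_def by auto
  have "mult_word m w (s (fst \<kappa>)) (snd \<kappa>) e = 0"
  proof (rule ccontr)
    assume "mult_word m w (s (fst \<kappa>)) (snd \<kappa>) e \<noteq> 0"
    then have "\<exists>i j. z_index m w i j \<and> path_nonzero m w i j (snd \<kappa>)"
      by (rule mult_word_nonzero_path[OF m1 supp])
    then show False using not_nonzero len unfolding nonzero_words_def by auto
  qed
  then show ?thesis unfolding key_value_def by simp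
qed

lemma eval_poly_eq_sum_keys:
  assumes gs: "graded_subst m w k n s"
  shows "eval_poly m w n p s e = (\<Sum>\<kappa>\<in>word_key k ` left_normed_mons n.
      (\<Sum>t\<in>{t \<in> left_normed_mons n. word_key k t = \<kappa>}. p t) * key_value m w k n s e \<kappa>)"
proof -
  have "eval_poly m w n p s e = (\<Sum>t\<in>left_normed_mons n. p t * eval_mon m w t s e)"
    unfolding eval_poly_def
  proof (rule sum.mono_neutral_right)
    show "finite (multilin_mons n)" by (rule finite_multilin_mons)
    show "left_normed_mons n \<subseteq> multilin_mons n" unfolding left_normed_mons_def by auto
    show "\<forall>t\<in>multilin_mons n - left_normed_mons n. p t * eval_mon m w t s e = 0"
    proof
      fix t assume "t \<in> multilin_mons n - left_normed_mons n"
      then have "left_normed t = None" unfolding left_normed_mons_def by blast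
      then show "p t * eval_mon m w t s e = 0" by (simp add: eval_mon_not_left_normed)
    qed
  qed
  also have "\<dots> = (\<Sum>t\<in>left_normed_mons n. p t * key_value m w k n s e (word_key k t))"
    using eval_mon_eq_key_value[OF gs] by simp
  also have "\<dots> = (\<Sum>\<kappa>\<in>word_key k ` left_normed_mons n. \<Sum>t\<in>{t \<in> left_normed_mons n. word_key k t = \<kappa>}.
      p t * key_value m w k n s e (word_key k t))"
    by (rule sum.image_gen[OF finite_left_normed_mons])
  finally show ?thesis by (simp add: sum_distrib_right)
qed

lemma graded_identity_if_key_coeffs_zero:
  fixes p :: "mon \<Rightarrow> 'a::field"
  assumes m1: "m \<ge> 1" and zero: "\<And>\<kappa>. key_coeffs m w k n p \<kappa> = 0"
  shows "graded_identity m w k n p"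
  unfolding graded_identity_def
proof (intro allI impI)
  fix s :: "nat \<Rightarrow> bidx \<Rightarrow> 'a" and e assume gs: "graded_subst m w k n s"
  have "(\<Sum>t\<in>{t \<in> left_normed_mons n. word_key k t = \<kappa>}. p t) * key_value m w k n s e \<kappa> = 0"
    if "\<kappa> \<in> word_key k ` left_normed_mons n" for \<kappa>
    using zero[of \<kappa>] key_value_irrelevant[OF m1 gs that] unfolding key_coeffs_def by (auto split: if_splits)
  then show "eval_poly m w n p s e = 0" unfolding eval_poly_eq_sum_keys[OF gs] by (rule sum.neutral[rule_format])
qed

lemma sum_apply_fun: "(\<Sum>a\<in>A. f a) x = (\<Sum>a\<in>A. f a x)"
  by (induct A rule: infinite_finite_induct) auto

definition fun_scale :: "'a::field \<Rightarrow> ('b \<Rightarrow> 'a) \<Rightarrow> 'b \<Rightarrow> 'a" where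
  "fun_scale c f x = c * f x"

interpretation fun_space: vector_space fun_scale
  by unfold_locales (auto simp: fun_scale_def fun_eq_iff algebra_simps)

lemma fun_space_independent:
  fixes V :: "nat \<Rightarrow> 'k \<Rightarrow> 'a::field"
  assumes indep: "\<And>c. (\<And>x. (\<Sum>l<r. c l * V l x) = 0) \<Longrightarrow> \<forall>i<r. c i = 0"
  shows "inj_on V {..<r}" and "\<not> fun_space.dependent (V ` {..<r})"
proof -
  have indep': "\<forall>i<r. c i = 0" if "(\<Sum>l<r. fun_scale (c l) (V l)) = 0" for c
    using indep[of c] fun_cong[OF that] unfolding sum_apply_fun fun_scale_def by simp
  show inj: "inj_on V {..<r}"
  proof (rule inj_onI)
    fix i j assume ij: "i \<in> {..<r}" "j \<in> {..<r}" "V i = V j"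
    show "i = j"
    proof (rule ccontr)
      assume ne: "i \<noteq> j"
      define c :: "nat \<Rightarrow> 'a" where "c l = (if l = i then 1 else if l = j then -1 else 0)" for l
      have "(\<Sum>l<r. fun_scale (c l) (V l)) = (\<Sum>l\<in>{i, j}. fun_scale (c l) (V l))"
        by (rule sum.mono_neutral_right) (use ij in \<open>auto simp: c_def fun_scale_def fun_eq_iff\<close>)
      also have "\<dots> = 0" using ne ij(3) by (simp add: c_def fun_scale_def fun_eq_iff)
      finally have "\<forall>l<r. c l = 0" by (rule indep')
      then show False using ij unfolding c_def by auto
    qed
  qed
  show "\<not> fun_space.dependent (V ` {..<r})"
  proof
    assume "fun_space.dependent (V ` {..<r})"
    then obtain T u where T: "finite T" "T \<subseteq> V ` {..<r}" "(\<Sum>v\<in>T. fun_scale (u v) v) = 0" "\<exists>v\<in>T. u v \<noteq> 0"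
      unfolding fun_space.dependent_explicit by blast
    define c where "c l = (if V l \<in> T then u (V l) else 0)" for l
    define I where "I = {l \<in> {..<r}. V l \<in> T}"
    have TI: "T = V ` I" unfolding I_def using T(2) by auto
    have injI: "inj_on V I" using inj unfolding I_def by (rule inj_on_subset) auto
    have "(\<Sum>l<r. fun_scale (c l) (V l)) = (\<Sum>l\<in>I. fun_scale (c l) (V l))"
      by (rule sum.mono_neutral_right) (auto simp: I_def c_def fun_scale_def fun_eq_iff)
    also have "\<dots> = (\<Sum>l\<in>I. fun_scale (u (V l)) (V l))" by (rule sum.cong) (auto simp: I_def c_def)
    also have "\<dots> = (\<Sum>v\<in>T. fun_scale (u v) v)" unfolding TI by (simp add: sum.reindex[OF injI])
    also have "\<dots> = 0" by (rule T(3))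
    finally have "\<forall>l<r. c l = 0" by (rule indep')
    moreover obtain v where "v \<in> T" "u v \<noteq> 0" using T(4) by blast
    moreover obtain l where "l < r" "v = V l" using \<open>v \<in> T\<close> T(2) by auto
    ultimately show False unfolding c_def by auto
  qed
qed

lemma fun_space_span_indicators:
  fixes f :: "'k \<Rightarrow> 'a::field"
  assumes K: "finite K" and supp: "\<And>x. x \<notin> K \<Longrightarrow> f x = 0"
  shows "f \<in> fun_space.span ((\<lambda>\<kappa> x. if x = \<kappa> then 1 else 0) ` K)"
proof -
  have "f = (\<Sum>\<kappa>\<in>K. fun_scale (f \<kappa>) (\<lambda>x. if x = \<kappa> then 1 else 0))"
  proof
    fix x
    show "f x = (\<Sum>\<kappa>\<in>K. fun_scale (f \<kappa>) (\<lambda>x. if x = \<kappa> then 1 else 0)) x"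
      unfolding sum_apply_fun fun_scale_def using K supp by (cases "x \<in> K") (simp_all add: if_distrib sum.delta cong: if_cong)
  qed
  also have "\<dots> \<in> fun_space.span ((\<lambda>\<kappa> x. if x = \<kappa> then 1 else 0) ` K)"
    by (intro fun_space.span_sum fun_space.span_scale fun_space.span_base) auto
  finally show ?thesis .
qed

lemma card_le_if_linear_independent:
  fixes V :: "nat \<Rightarrow> 'k \<Rightarrow> 'a::field"
  assumes K: "finite K" and supp: "\<And>i x. i < r \<Longrightarrow> x \<notin> K \<Longrightarrow> V i x = 0"
    and indep: "\<And>c. (\<And>x. (\<Sum>l<r. c l * V l x) = 0) \<Longrightarrow> \<forall>i<r. c i = 0"
  shows "r \<le> card K"
proof -
  define \<delta> where "\<delta> \<kappa> = (\<lambda>x. if x = \<kappa> then (1::'a) else 0)" for \<kappa> :: 'k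
  have span: "V ` {..<r} \<subseteq> fun_space.span (\<delta> ` K)"
    using fun_space_span_indicators[OF K] supp unfolding \<delta>_def by blast
  have "\<not> fun_space.dependent (V ` {..<r})" by (rule fun_space_independent(2)) (rule indep)
  then have "card (V ` {..<r}) \<le> card (\<delta> ` K)"
    using fun_space.independent_span_bound[OF finite_imageI[OF K] _ span] by simp
  also have "\<dots> \<le> card K" by (rule card_image_le[OF K])
  moreover have "inj_on V {..<r}" by (rule fun_space_independent(1)) (rule indep)
  ultimately show ?thesis using card_image by fastforce
qed

lemma key_coeffs_linear:
  "key_coeffs m w k n (\<lambda>t. \<Sum>l<r. c l * f l t) \<kappa> = (\<Sum>l<r. c l * key_coeffs m w k n (f l) \<kappa>)"
  unfolding key_coeffs_def by (auto simp: sum_distrib_left intro: sum.swap)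

lemma cgr_kl_le_card_relevant_keys:
  assumes m1: "m \<ge> 1"
  shows "cgr_kl (F :: 'a::field itself) m w k n \<le> card (relevant_keys m w k n)"
proof -
  define S where "S = {r. \<exists>f :: nat \<Rightarrow> mon \<Rightarrow> 'a.
      (\<forall>i<r. f i \<in> multilin_polys n) \<and>
      (\<forall>c :: nat \<Rightarrow> 'a. graded_identity m w k n (\<lambda>t. \<Sum>i<r. c i * f i t) \<longrightarrow> (\<forall>i<r. c i = 0))}"
  have bound: "r \<le> card (relevant_keys m w k n)" if "r \<in> S" for r
  proof -
    from that obtain f :: "nat \<Rightarrow> mon \<Rightarrow> 'a" where
      indep: "\<forall>c :: nat \<Rightarrow> 'a. graded_identity m w k n (\<lambda>t. \<Sum>i<r. c i * f i t) \<longrightarrow> (\<forall>i<r. c i = 0)"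
      unfolding S_def by blast
    show ?thesis
    proof (rule card_le_if_linear_independent[OF finite_relevant_keys])
      show "key_coeffs m w k n (f i) \<kappa> = 0" if "\<kappa> \<notin> relevant_keys m w k n" for i \<kappa>
        using that unfolding key_coeffs_def by simp
      fix c assume "\<And>\<kappa>. (\<Sum>l<r. c l * key_coeffs m w k n (f l) \<kappa>) = 0"
      then have "graded_identity m w k n (\<lambda>t. \<Sum>l<r. c l * f l t)"
        by (intro graded_identity_if_key_coeffs_zero[OF m1]) (simp add: key_coeffs_linear)
      then show "\<forall>i<r. c i = 0" using indep by blast
    qed
  qed
  have "0 \<in> S" unfolding S_def by auto
  moreover have "finite S" using bound finite_nat_set_iff_bounded_le by blast
  ultimately have "Max S \<le> card (relevant_keys m w k n)" using bound by (intro Max.boundedI) auto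
  then show ?thesis unfolding cgr_kl_def S_def by simp
qed

text \<open>From \<open>z_j^(i)\<close>, the only nonzero word reads \<open>a\<close> up to the end of the block \<open>z^(i)\<close> of length
  \<open>m + w_i\<close>, then \<open>b\<close>, and so on; \<open>u\<close> lists \<open>w_i, w_(i+1), \<dots>\<close>.\<close>

fun forced_word :: "nat \<Rightarrow> nat \<Rightarrow> nat list \<Rightarrow> nat \<Rightarrow> bool list" where
  "forced_word m j u 0 = []"
| "forced_word m j u (Suc L) = (if j < m + hd u then True # forced_word m (Suc j) u L else False # forced_word m 1 (tl u) L)"

lemma path_nonzero_forced_word:
  assumes m1: "m \<ge> 1"
  shows "path_nonzero m w i j pat \<Longrightarrow> j \<le> m + w i \<Longrightarrow> N \<ge> length pat + 1 \<Longrightarrow> pat = forced_word m j (factor_at w i N) (length pat)"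
proof (induct pat arbitrary: i j N)
  case Nil then show ?case by simp
next
  case (Cons b ps)
  obtain N' where N: "N = Suc N'" using Cons.prems(3) by (cases N) auto
  have u: "factor_at w i N = w i # factor_at w (Suc i) N'" unfolding N by (rule factor_at_Suc_Cons)
  show ?case
  proof (cases b)
    case True
    then have h: "j < m + w i" "path_nonzero m w i (Suc j) ps" using Cons.prems by auto
    have "ps = forced_word m (Suc j) (factor_at w i N) (length ps)" using Cons.hyps[OF h(2)] h(1) Cons.prems(3) by simp
    then show ?thesis using True h(1) u by simp
  next
    case False
    then have h: "j = m + w i" "path_nonzero m w (Suc i) 1 ps" using Cons.prems by auto
    have "ps = forced_word m 1 (factor_at w (Suc i) N') (length ps)" using Cons.hyps[OF h(2)] Cons.prems(3) N m1 by simp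
    then show ?thesis using False h(1) u by simp
  qed
qed

lemma card_nonzero_words_le:
  assumes bin: "binary_word w" and m1: "m \<ge> 1"
  shows "card (nonzero_words m w L) \<le> (m + 1) * card (factors w (L + 1))"
proof -
  have sub: "nonzero_words m w L \<subseteq> (\<lambda>(j, u). forced_word m j u L) ` ({1..m+1} \<times> factors w (L + 1))"
  proof
    fix pat assume "pat \<in> nonzero_words m w L"
    then obtain i j where ij: "length pat = L" "z_index m w i j" "path_nonzero m w i j pat" unfolding nonzero_words_def by auto
    have z: "1 \<le> i" "1 \<le> j" "j \<le> m + w i" using ij(2) unfolding z_index_def by auto
    have "w i \<le> 1" using bin z(1) unfolding binary_word_def by fastforce
    then have jm: "j \<in> {1..m+1}" using z by auto
    have "pat = forced_word m j (factor_at w i (L + 1)) L" using path_nonzero_forced_word[OF m1 ij(3) z(3)] ij(1) by simp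
    moreover have "factor_at w i (L + 1) \<in> factors w (L + 1)" using factor_at_in_factors z(1) by blast
    ultimately show "pat \<in> (\<lambda>(j, u). forced_word m j u L) ` ({1..m+1} \<times> factors w (L + 1))"
      using jm by (intro image_eqI[of _ _ "(j, factor_at w i (L + 1))"]) auto
  qed
  have "card (nonzero_words m w L) \<le> card ((\<lambda>(j, u). forced_word m j u L) ` ({1..m+1} \<times> factors w (L + 1)))"
    by (rule card_mono) (use sub finite_factors[OF bin] in auto)
  also have "\<dots> \<le> card ({1..m+1} \<times> factors w (L + 1))" by (rule card_image_le) (use finite_factors[OF bin] in auto)
  also have "\<dots> = (m + 1) * card (factors w (L + 1))" by (simp add: card_cartesian_product)
  finally show ?thesis .
qed

lemma finite_nonzero_words:
  assumes bin: "binary_word w" shows "finite (nonzero_words m w L)"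
proof -
  have "nonzero_words m w L \<subseteq> {xs. set xs \<subseteq> {True, False} \<and> length xs = L}" unfolding nonzero_words_def by auto
  moreover have "finite {xs. set xs \<subseteq> {True, False} \<and> length xs = L}" by (rule finite_lists_length_eq) simp
  ultimately show ?thesis using finite_subset by blast
qed

definition count_b :: "bool list \<Rightarrow> nat" where "count_b pat = length (filter Not pat)"

text \<open>A left-normed multilinear monomial in \<open>k\<close> even and \<open>n - k\<close> odd variables has \<open>n - k\<close> or
  \<open>n - k - 1\<close> odd variables after the first one, depending on the parity of the first.\<close>

definition graded_words :: "nat \<Rightarrow> (nat \<Rightarrow> nat) \<Rightarrow> nat \<Rightarrow> nat \<Rightarrow> bool list set" where
  "graded_words m w k n = {pat \<in> nonzero_words m w (n - 1). count_b pat = n - k \<or> count_b pat + 1 = n - k}"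

lemma card_relevant_keys_le:
  assumes bin: "binary_word w" and kn: "k \<le> n"
  shows "card (relevant_keys m w k n) \<le> n * card (graded_words m w k n)"
proof -
  have sub: "relevant_keys m w k n \<subseteq> {..<n} \<times> graded_words m w k n"
  proof
    fix \<kappa> assume k: "\<kappa> \<in> relevant_keys m w k n"
    then obtain t where t: "t \<in> left_normed_mons n" "\<kappa> = word_key k t" "snd \<kappa> \<in> nonzero_words m w (n - 1)" unfolding relevant_keys_def by auto
    obtain v1 vs where d: "left_normed t = Some (v1, vs)" "distinct (v1 # vs)" "set (v1 # vs) = {..<n}"
      "word_key k t = (v1, map (\<lambda>v. v < k) vs)" using left_normed_monsE[OF t(1)] by blast
    have v1: "v1 < n" using d(3) by auto
    have sv: "set vs = {..<n} - {v1}" using d(2,3) by auto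
    have "count_b (map (\<lambda>v. v < k) vs) = length (filter (\<lambda>v. \<not> v < k) vs)"
      unfolding count_b_def by (simp add: filter_map o_def)
    also have "\<dots> = card ({v. \<not> v < k} \<inter> set vs)" using d(2) by (simp add: distinct_length_filter)
    also have "{v. \<not> v < k} \<inter> set vs = {k..<n} - {v1}" unfolding sv by auto
    finally have q: "count_b (map (\<lambda>v. v < k) vs) = card ({k..<n} - {v1})" .
    have "count_b (map (\<lambda>v. v < k) vs) = n - k \<or> count_b (map (\<lambda>v. v < k) vs) + 1 = n - k"
    proof (cases "k \<le> v1")
      case True
      then have "card ({k..<n} - {v1}) = n - k - 1" using v1 by simp
      then show ?thesis using q True v1 by arith
    next
      case False
      then have "{k..<n} - {v1} = {k..<n}" by auto
      then show ?thesis using q by simp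
    qed
    then show "\<kappa> \<in> {..<n} \<times> graded_words m w k n" using t d v1 unfolding graded_words_def by auto
  qed
  have fin: "finite (graded_words m w k n)" unfolding graded_words_def using finite_nonzero_words[OF bin] by simp
  have "card (relevant_keys m w k n) \<le> card ({..<n} \<times> graded_words m w k n)" by (rule card_mono) (use fin sub in auto)
  also have "\<dots> = n * card (graded_words m w k n)" by (simp add: card_cartesian_product)
  finally show ?thesis .
qed

lemma length_path_nonzero_ge:
  assumes m1: "m \<ge> 1"
  shows "path_nonzero m w i j pat \<Longrightarrow> j \<le> m + w i \<Longrightarrow> count_b pat \<ge> 1 \<Longrightarrow>
     (m + w i - j) + 1 + (count_b pat - 1) * m + weight w (Suc i) (count_b pat - 1) \<le> length pat"
proof (induct pat arbitrary: i j)
  case Nil then show ?case by (simp add: count_b_def)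
next
  case (Cons b ps)
  show ?case
  proof (cases b)
    case True
    then have h: "j < m + w i" "path_nonzero m w i (Suc j) ps" using Cons.prems by auto
    have q: "count_b (b # ps) = count_b ps" using True by (simp add: count_b_def)
    have "(m + w i - Suc j) + 1 + (count_b ps - 1) * m + weight w (Suc i) (count_b ps - 1) \<le> length ps"
      using Cons.hyps[OF h(2)] h(1) Cons.prems(3) q by simp
    then show ?thesis using q h(1) by simp
  next
    case False
    then have h: "j = m + w i" "path_nonzero m w (Suc i) 1 ps" using Cons.prems by auto
    have q: "count_b (b # ps) = count_b ps + 1" using False by (simp add: count_b_def)
    show ?thesis
    proof (cases "count_b ps = 0")
      case True then show ?thesis using q h by simp
    next
      case False
      then have ih: "(m + w (Suc i) - 1) + 1 + (count_b ps - 1) * m + weight w (Suc (Suc i)) (count_b ps - 1) \<le> length ps"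
        using Cons.hyps[OF h(2)] m1 by simp
      have "weight w (Suc i) (count_b ps) = w (Suc i) + weight w (Suc (Suc i)) (count_b ps - 1)"
        using weight_Suc_left[of w "Suc i" "count_b ps - 1"] False by simp
      moreover have "count_b ps * m = m + (count_b ps - 1) * m" using False by (cases "count_b ps") auto
      ultimately show ?thesis using q h ih m1 by simp
    qed
  qed
qed

lemma nonzero_word_length_ge:
  assumes m1: "m \<ge> 1" and pat: "pat \<in> nonzero_words m w L" and q1: "count_b pat \<ge> 1"
  shows "\<exists>i\<ge>1. 1 + (count_b pat - 1) * m + weight w (Suc i) (count_b pat - 1) \<le> L"
proof -
  obtain i j where ij: "length pat = L" "z_index m w i j" "path_nonzero m w i j pat" using pat unfolding nonzero_words_def by auto
  have "j \<le> m + w i" "i \<ge> 1" using ij(2) unfolding z_index_def by auto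
  then show ?thesis using length_path_nonzero_ge[OF m1 ij(3) _ q1] ij(1) by fastforce
qed

section \<open>The exponential bound\<close>

lemma binomial_term_le_1:
  fixes x :: real
  assumes "0 \<le> x" "x \<le> 1" "q \<le> n"
  shows "real (n choose q) * x ^ q * (1 - x) ^ (n - q) \<le> 1"
proof -
  have "(x + (1 - x)) ^ n = (\<Sum>k\<le>n. real (n choose k) * x ^ k * (1 - x) ^ (n - k))"
    by (rule binomial_ring)
  then have eq: "(\<Sum>k\<le>n. real (n choose k) * x ^ k * (1 - x) ^ (n - k)) = 1" by simp
  have "real (n choose q) * x ^ q * (1 - x) ^ (n - q) \<le> (\<Sum>k\<le>n. real (n choose k) * x ^ k * (1 - x) ^ (n - k))"
    by (rule member_le_sum) (use assms in auto)
  then show ?thesis using eq by simp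
qed

lemma Phi_power:
  fixes x :: real
  assumes "0 < x" "x < 1"
  shows "Phi x ^ n = exp (- (real n * (x * ln x + (1 - x) * ln (1 - x))))"
proof -
  have "Phi x = exp (- (x * ln x + (1 - x) * ln (1 - x)))"
    unfolding Phi_def using assms by (simp add: powr_def exp_add[symmetric] algebra_simps)
  then have "Phi x ^ n = exp (real n * (- (x * ln x + (1 - x) * ln (1 - x))))"
    by (simp add: exp_of_nat_mult)
  then show ?thesis by (simp add: algebra_simps)
qed

lemma binomial_le_Phi_power:
  fixes x :: real
  assumes x: "0 < x" "x \<le> 1/2" and q: "real q \<le> x * real n"
  shows "real (n choose q) \<le> Phi x ^ n"
proof -
  have x1: "x < 1" using x by simp
  have qn: "q \<le> n"
  proof -
    have "x * real n \<le> 1 * real n" using x by (intro mult_right_mono) auto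
    then have "real q \<le> real n" using q by simp
    then show ?thesis by simp
  qed
  have pos: "x ^ q * (1 - x) ^ (n - q) > 0" using x1 x by simp
  have B: "real (n choose q) \<le> 1 / (x ^ q * (1 - x) ^ (n - q))"
    using binomial_term_le_1[of x q n] x x1 qn pos by (simp add: field_simps)
  have E: "x ^ q * (1 - x) ^ (n - q) = exp (real q * ln x + real (n - q) * ln (1 - x))"
    using x x1 by (simp add: exp_add ln_realpow[symmetric])
  have lnle: "ln x \<le> ln (1 - x)" using x by simp
  have "real q * ln x + real (n - q) * ln (1 - x) = real n * ln (1 - x) + real q * (ln x - ln (1 - x))"
    using qn by (simp add: of_nat_diff algebra_simps)
  also have "\<dots> \<ge> real n * ln (1 - x) + x * real n * (ln x - ln (1 - x))"
    using q lnle by (intro add_left_mono mult_right_mono_neg) auto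
  finally have ge: "real q * ln x + real (n - q) * ln (1 - x) \<ge> real n * (x * ln x + (1 - x) * ln (1 - x))"
    by (simp add: algebra_simps)
  have "1 / (x ^ q * (1 - x) ^ (n - q)) = exp (- (real q * ln x + real (n - q) * ln (1 - x)))"
    unfolding E using exp_minus[of "real q * ln x + real (n - q) * ln (1 - x)"] by (simp add: inverse_eq_divide)
  also have "\<dots> \<le> exp (- (real n * (x * ln x + (1 - x) * ln (1 - x))))" using ge by simp
  also have "\<dots> = Phi x ^ n" using Phi_power[OF x(1) x1] by simp
  finally show ?thesis using B by simp
qed

lemma sum_card_graded_words:
  assumes bin: "binary_word w"
  shows "(\<Sum>k=0..n. card (graded_words m w k n)) \<le> 2 * card (nonzero_words m w (n - 1))"
proof -
  define R where "R = nonzero_words m w (n - 1)"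
  have finR: "finite R" unfolding R_def by (rule finite_nonzero_words[OF bin])
  have c: "card (graded_words m w k n) = (\<Sum>p\<in>R. if p \<in> graded_words m w k n then 1 else 0)" for k
  proof -
    have "(\<Sum>p\<in>R. if p \<in> graded_words m w k n then 1 else 0) = card (R \<inter> graded_words m w k n)"
      using finR by (simp add: sum.If_cases)
    also have "R \<inter> graded_words m w k n = graded_words m w k n" unfolding R_def graded_words_def by auto
    finally show ?thesis by simp
  qed
  have "(\<Sum>k=0..n. card (graded_words m w k n)) = (\<Sum>k=0..n. \<Sum>p\<in>R. if p \<in> graded_words m w k n then 1 else 0)"
    using c by simp
  also have "\<dots> = (\<Sum>p\<in>R. \<Sum>k=0..n. if p \<in> graded_words m w k n then 1 else 0)" by (rule sum.swap)
  also have "\<dots> \<le> (\<Sum>p\<in>R. 2)"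
  proof (rule sum_mono)
    fix p assume "p \<in> R"
    have "(\<Sum>k=0..n. if p \<in> graded_words m w k n then 1 else 0) = card ({0..n} \<inter> {k. p \<in> graded_words m w k n})"
      by (simp add: sum.If_cases)
    also have "\<dots> \<le> card {n - count_b p, n - (count_b p + 1)}"
      by (rule card_mono) (auto simp: graded_words_def)
    also have "\<dots> \<le> 2" by (rule card_insert_le_m1) auto
    finally show "(\<Sum>k=0..n. if p \<in> graded_words m w k n then 1 else 0) \<le> (2::nat)" .
  qed
  also have "\<dots> = 2 * card R" by simp
  finally show ?thesis unfolding R_def .
qed

lemma cgr_le_binomial_bound:
  assumes m1: "m \<ge> 1" and bin: "binary_word w" and B: "B \<ge> 0"
    and hyp: "\<And>k. k \<le> n \<Longrightarrow> graded_words m w k n \<noteq> {} \<Longrightarrow> real (n choose k) \<le> B"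
  shows "real (cgr (F :: 'a::field itself) m w n) \<le> 2 * B * real n * real (card (nonzero_words m w (n - 1)))"
proof -
  have "real (cgr F m w n) = (\<Sum>k=0..n. real (n choose k) * real (cgr_kl F m w k n))"
    unfolding cgr_def by simp
  also have "\<dots> \<le> (\<Sum>k=0..n. B * (real n * real (card (graded_words m w k n))))"
  proof (rule sum_mono)
    fix k assume k: "k \<in> {0..n}"
    have A: "cgr_kl F m w k n \<le> card (relevant_keys m w k n)" by (rule cgr_kl_le_card_relevant_keys[OF m1])
    have B: "card (relevant_keys m w k n) \<le> n * card (graded_words m w k n)" by (rule card_relevant_keys_le[OF bin]) (use k in simp)
    have "cgr_kl F m w k n \<le> n * card (graded_words m w k n)" using A B by (rule order_trans)
    then have c: "real (cgr_kl F m w k n) \<le> real n * real (card (graded_words m w k n))"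
      by (metis of_nat_le_iff of_nat_mult)
    show "real (n choose k) * real (cgr_kl F m w k n) \<le> B * (real n * real (card (graded_words m w k n)))"
    proof (cases "graded_words m w k n = {}")
      case True
      then show ?thesis using c by simp
    next
      case False
      then have "real (n choose k) \<le> B" using hyp k by simp
      then show ?thesis using c by (intro mult_mono) auto
    qed
  qed
  also have "\<dots> = B * real n * real (\<Sum>k=0..n. card (graded_words m w k n))"
    by (simp add: sum_distrib_left algebra_simps)
  also have "\<dots> \<le> B * real n * real (2 * card (nonzero_words m w (n - 1)))"
  proof -
    have "real (\<Sum>k=0..n. card (graded_words m w k n)) \<le> real (2 * card (nonzero_words m w (n - 1)))"
      using sum_card_graded_words[OF bin, of m n] by (simp only: of_nat_le_iff)
    then show ?thesis using B by (intro mult_left_mono) auto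
  qed
  finally show ?thesis by (simp add: algebra_simps)
qed

lemma limsup_root_le:
  fixes a :: "nat \<Rightarrow> nat" and c :: real
  assumes c: "c > 0" and ev: "\<exists>N. \<forall>n\<ge>N. real (a n) \<le> 2 * real n ^ 3 * c ^ n"
  shows "limsup (\<lambda>n. ereal (root n (real (a n)))) \<le> ereal c"
proof -
  obtain N where N: "\<forall>n\<ge>N. real (a n) \<le> 2 * real n ^ 3 * c ^ n" using ev by blast
  define g where "g n = root n 2 * root n (real n) ^ 3 * c" for n
  have le: "eventually (\<lambda>n. ereal (root n (real (a n))) \<le> ereal (g n)) sequentially"
  proof (rule eventually_sequentiallyI[of "max N 1"])
    fix n assume n: "n \<ge> max N 1"
    then have n0: "0 < n" by simp
    have "root n (real (a n)) \<le> root n (2 * real n ^ 3 * c ^ n)"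
      using N n n0 by (simp add: real_root_le_mono)
    also have "\<dots> = root n 2 * root n (real n) ^ 3 * root n (c ^ n)"
      by (simp add: real_root_mult real_root_power[OF n0])
    also have "root n (c ^ n) = c" using real_root_power_cancel[OF n0, of c] c by simp
    finally show "ereal (root n (real (a n))) \<le> ereal (g n)" unfolding g_def by simp
  qed
  have "g \<longlonglongrightarrow> 1 * 1 ^ 3 * c" unfolding g_def
    by (intro tendsto_intros LIMSEQ_root_const LIMSEQ_root) simp
  then have "(\<lambda>n. ereal (g n)) \<longlonglongrightarrow> ereal c" by (simp add: tendsto_ereal)
  then have "limsup (\<lambda>n. ereal (g n)) = ereal c" by (rule lim_imp_Limsup[rotated]) simp
  moreover have "limsup (\<lambda>n. ereal (root n (real (a n)))) \<le> limsup (\<lambda>n. ereal (g n))"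
    by (rule Limsup_mono[OF le])
  ultimately show ?thesis by simp
qed

lemma slope_between_0_1:
  assumes bin: "binary_word w" and sl: "has_slope w \<alpha>"
  shows "0 \<le> \<alpha>" "\<alpha> \<le> 1"
proof -
  have X: "(\<lambda>n. (\<Sum>i=1..n. real (w i)) / real n) \<longlonglongrightarrow> \<alpha>" using sl unfolding has_slope_def .
  have b: "0 \<le> (\<Sum>i=1..n. real (w i)) / real n \<and> (\<Sum>i=1..n. real (w i)) / real n \<le> 1" if "n \<ge> 1" for n
  proof -
    have "(\<Sum>i=1..n. real (w i)) \<le> (\<Sum>i=1..n. 1)"
    proof (rule sum_mono)
      fix i assume "i \<in> {1..n}"
      then have "w i \<in> {0,1}" using bin unfolding binary_word_def by auto
      then show "real (w i) \<le> 1" by auto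
    qed
    then have "(\<Sum>i=1..n. real (w i)) \<le> real n" by simp
    moreover have "0 \<le> (\<Sum>i=1..n. real (w i))" by (simp add: sum_nonneg)
    ultimately show ?thesis using that by (simp add: divide_le_eq)
  qed
  show "0 \<le> \<alpha>" by (rule LIMSEQ_le_const[OF X]) (use b in auto)
  show "\<alpha> \<le> 1"
  proof (rule LIMSEQ_le_const2[OF X])
    show "\<exists>N. \<forall>n\<ge>N. (\<Sum>i=1..n. real (w i)) / real n \<le> 1" using b by blast
  qed
qed

lemma count_b_linear_bound:
  assumes m1: "m \<ge> 1" and UL: "uniform_lower_slope w \<alpha>" and d: "\<delta> > 0"
  obtains l0 where "\<And>n pat. pat \<in> nonzero_words m w (n - 1) \<Longrightarrow> count_b pat \<ge> l0 + 2 \<Longrightarrow>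
    real (count_b pat - 1) * (real m + \<alpha> - \<delta>) \<le> real n - 2"
proof -
  obtain l0 where l0: "\<forall>l\<ge>l0. \<forall>i\<ge>1. (\<alpha> - \<delta>) * real l \<le> real (weight w i l)"
    using UL d unfolding uniform_lower_slope_def by blast
  have "real (count_b pat - 1) * (real m + \<alpha> - \<delta>) \<le> real n - 2"
    if pat: "pat \<in> nonzero_words m w (n - 1)" and q: "count_b pat \<ge> l0 + 2" for n pat
  proof -
    define q where "q = count_b pat"
    obtain i where i: "i \<ge> 1" "1 + (q - 1) * m + weight w (Suc i) (q - 1) \<le> n - 1"
      using nonzero_word_length_ge[OF m1 pat] q unfolding q_def by auto
    have "q - 1 \<ge> l0" using q unfolding q_def by simp
    then have W: "(\<alpha> - \<delta>) * real (q - 1) \<le> real (weight w (Suc i) (q - 1))" using l0 by simp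
    have "real (1 + (q - 1) * m + weight w (Suc i) (q - 1)) \<le> real (n - 1)" using i(2) by (simp only: of_nat_le_iff)
    then have "1 + real (q - 1) * real m + real (weight w (Suc i) (q - 1)) \<le> real n - 1"
      using i(2) by (simp add: of_nat_diff)
    then show ?thesis using W unfolding q_def by (simp add: algebra_simps)
  qed
  then show ?thesis by (rule that)
qed

lemma count_b_eventually_le:
  assumes m1: "m \<ge> 1" and UL: "uniform_lower_slope w \<alpha>" and x: "x > 0" and xa: "1 / x < real m + \<alpha>"
  shows "\<exists>N0. \<forall>n\<ge>N0. \<forall>pat\<in>nonzero_words m w (n - 1). real (count_b pat) + 1 \<le> x * real n"
proof -
  define \<delta> where "\<delta> = (real m + \<alpha> - 1 / x) / 2"
  define c where "c = 1 / (real m + \<alpha> - \<delta>)"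
  have d: "\<delta> > 0" unfolding \<delta>_def using xa by simp
  have D: "real m + \<alpha> - \<delta> = (real m + \<alpha> + 1 / x) / 2" unfolding \<delta>_def by (simp add: field_simps)
  then have Dp: "real m + \<alpha> - \<delta> > 0" using xa x by (smt (verit) divide_pos_pos)
  have cx: "0 < c" "c < x" unfolding c_def using D Dp x xa by (simp_all add: field_simps)
  obtain l0 where l0: "\<And>n pat. pat \<in> nonzero_words m w (n - 1) \<Longrightarrow> count_b pat \<ge> l0 + 2 \<Longrightarrow>
      real (count_b pat - 1) * (real m + \<alpha> - \<delta>) \<le> real n - 2"
    using count_b_linear_bound[OF m1 UL d] by blast
  obtain N0 :: nat where N0: "real N0 \<ge> 2 / (x - c) + (real l0 + 2) / x" using real_arch_simple by blast
  show ?thesis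
  proof (intro exI[of _ N0] allI impI ballI)
    fix n pat assume n: "n \<ge> N0" and pat: "pat \<in> nonzero_words m w (n - 1)"
    have "2 / (x - c) \<ge> 0" "(real l0 + 2) / x \<ge> 0" using cx x by auto
    then have "real n \<ge> (real l0 + 2) / x" "real n \<ge> 2 / (x - c)" using n N0 by linarith+
    then have A: "x * real n \<ge> real l0 + 2" and B: "(x - c) * real n \<ge> 2"
      using x cx by (simp_all add: field_simps)
    show "real (count_b pat) + 1 \<le> x * real n"
    proof (cases "count_b pat \<ge> l0 + 2")
      case True
      have "real (count_b pat - 1) \<le> (real n - 2) * c"
        using l0[OF pat True] Dp unfolding c_def by (simp add: field_simps)
      also have "\<dots> \<le> real n * c" using cx by (simp add: algebra_simps)
      finally have "real (count_b pat) + 1 \<le> real n * c + 2" using True by (simp add: of_nat_diff)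
      also have "\<dots> \<le> x * real n" using B by (simp add: algebra_simps)
      finally show ?thesis .
    next
      case False
      then show ?thesis using A by simp
    qed
  qed
qed

lemma Phi_pos: "x > 0 \<Longrightarrow> x < 1 \<Longrightarrow> Phi x > 0"
  unfolding Phi_def by simp

lemma Phi_half: "Phi (1/2) = 2"
proof -
  have "Phi (1/2) = (1/2) powr (-1/2) * (1/2) powr (-1/2)" unfolding Phi_def by simp
  also have "\<dots> = (1/2) powr (-1)" by (simp add: powr_add[symmetric])
  also have "\<dots> = 2" by (simp add: powr_minus)
  finally show ?thesis .
qed

lemma isCont_Phi: "0 < x \<Longrightarrow> x < 1 \<Longrightarrow> isCont Phi x"
  unfolding Phi_def by (auto intro!: continuous_intros)

lemma limsup_root_le_Phi:
  fixes a :: "nat \<Rightarrow> nat"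
  assumes \<beta>: "0 < \<beta>" "\<beta> < 1/2"
    and bound: "\<And>\<epsilon>. 0 < \<epsilon> \<Longrightarrow> \<epsilon> \<le> 1/2 - \<beta> \<Longrightarrow> \<exists>N. \<forall>n\<ge>N. real (a n) \<le> 2 * real n ^ 3 * Phi (\<beta> + \<epsilon>) ^ n"
  shows "limsup (\<lambda>n. ereal (root n (real (a n)))) \<le> ereal (Phi \<beta>)"
proof -
  define d where "d = 1/2 - \<beta>"
  define e where "e k = d / real (k + 2)" for k :: nat
  have "d > 0" unfolding d_def using \<beta> by simp
  then have e: "0 < e k" "e k \<le> 1/2 - \<beta>" for k unfolding e_def d_def[symmetric] by (auto simp: field_simps)
  have le: "limsup (\<lambda>n. ereal (root n (real (a n)))) \<le> ereal (Phi (\<beta> + e k))" for k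
    by (rule limsup_root_le) (use Phi_pos[of "\<beta> + e k"] e[of k] \<beta> bound in auto)
  have "e \<longlonglongrightarrow> 0" unfolding e_def
    using LIMSEQ_ignore_initial_segment[OF lim_const_over_n[of d], of 2] by simp
  then have "(\<lambda>k. \<beta> + e k) \<longlonglongrightarrow> \<beta> + 0" by (intro tendsto_add tendsto_const)
  then have "(\<lambda>k. Phi (\<beta> + e k)) \<longlonglongrightarrow> Phi \<beta>"
    using isCont_tendsto_compose[OF isCont_Phi[of \<beta>]] \<beta> by simp
  then have "(\<lambda>k. ereal (Phi (\<beta> + e k))) \<longlonglongrightarrow> ereal (Phi \<beta>)" by (simp add: tendsto_ereal)
  then show ?thesis by (rule LIMSEQ_le_const) (use le in blast)
qed

lemma factors_linear_bound:
  assumes "periodic_word w \<or> sturmian_word w"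
  obtains C where "\<And>n. card (factors w n) \<le> n + 1 + C"
proof (cases "sturmian_word w")
  case True
  then show ?thesis using that[of 0] sturmian_card_factors by simp
next
  case False
  then obtain p where "p \<ge> 1" "\<forall>i\<ge>1. w (i + p) = w i" using assms unfolding periodic_word_def by blast
  then have "eventually_periodic w" unfolding eventually_periodic_def by blast
  then obtain C where "\<And>n. card (factors w n) \<le> C" using eventually_periodic_bounded_complexity by blast
  then show ?thesis using that[of C] by (meson le_add2 order_trans)
qed

lemma uniform_lower_slope_if_periodic_or_sturmian:
  assumes bin: "binary_word w" and "periodic_word w \<or> sturmian_word w" and sl: "has_slope w \<alpha>"
  shows "uniform_lower_slope w \<alpha>"
  using assms periodic_uniform_lower_slope[OF bin _ sl]
    balanced_uniform_lower_slope[OF sturmian_balanced[OF bin] sl] by blast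

lemma card_nonzero_words_le_square:
  assumes m1: "m \<ge> 1" and bin: "binary_word w" and C: "\<And>n. card (factors w n) \<le> n + 1 + C"
    and n: "n \<ge> (m + 1) * (C + 2)"
  shows "card (nonzero_words m w (n - 1)) \<le> n ^ 2"
proof -
  have "1 \<le> (m + 1) * (C + 2)" by simp
  then have n1: "n \<ge> 1" using n by linarith
  have "card (nonzero_words m w (n - 1)) \<le> (m + 1) * card (factors w n)"
    using card_nonzero_words_le[OF bin m1, of "n - 1"] n1 by simp
  also have "\<dots> \<le> (m + 1) * (n * (C + 2))"
  proof (rule mult_le_mono2)
    have "C \<le> n * C" using n1 by simp
    moreover have "n * (C + 2) = n * C + 2 * n" by (simp add: algebra_simps)
    ultimately show "card (factors w n) \<le> n * (C + 2)" using C[of n] n1 by linarith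
  qed
  also have "\<dots> = n * ((m + 1) * (C + 2))" by (simp only: mult.assoc mult.left_commute)
  also have "\<dots> \<le> n * n" using n by (rule mult_le_mono2)
  finally show ?thesis by (simp add: power2_eq_square)
qed

lemma cgr_le_cubic:
  assumes m1: "m \<ge> 1" and bin: "binary_word w" and C: "\<And>n. card (factors w n) \<le> n + 1 + C"
    and n: "n \<ge> (m + 1) * (C + 2)" and B: "B \<ge> 0"
    and binomial: "\<And>k. k \<le> n \<Longrightarrow> graded_words m w k n \<noteq> {} \<Longrightarrow> real (n choose k) \<le> B"
  shows "real (cgr (F :: 'a::field itself) m w n) \<le> 2 * real n ^ 3 * B"
proof -
  have "real (cgr F m w n) \<le> 2 * B * real n * real (card (nonzero_words m w (n - 1)))"
    by (rule cgr_le_binomial_bound[OF m1 bin B binomial])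
  also have "\<dots> \<le> 2 * B * real n * real n ^ 2"
  proof (rule mult_left_mono)
    show "real (card (nonzero_words m w (n - 1))) \<le> real n ^ 2"
      using card_nonzero_words_le_square[OF m1 bin C n] by (metis of_nat_le_iff of_nat_power)
  qed (use B in simp)
  finally show ?thesis by (simp add: power_def algebra_simps)
qed

lemma cgr_eventually_le_Phi_power:
  assumes m1: "m \<ge> 1" and bin: "binary_word w" and C: "\<And>n. card (factors w n) \<le> n + 1 + C"
    and UL: "uniform_lower_slope w \<alpha>" and x: "0 < x" "x \<le> 1/2" "1 / x < real m + \<alpha>"
  shows "\<exists>n0. \<forall>n\<ge>n0. real (cgr (F :: 'a::field itself) m w n) \<le> 2 * real n ^ 3 * Phi x ^ n"
proof -
  obtain N0 where N0: "\<forall>n\<ge>N0. \<forall>pat\<in>nonzero_words m w (n - 1). real (count_b pat) + 1 \<le> x * real n"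
    using count_b_eventually_le[OF m1 UL x(1) x(3)] by blast
  show ?thesis
  proof (intro exI[of _ "max N0 ((m + 1) * (C + 2))"] allI impI)
    fix n assume n: "max N0 ((m + 1) * (C + 2)) \<le> n"
    show "real (cgr F m w n) \<le> 2 * real n ^ 3 * Phi x ^ n"
    proof (rule cgr_le_cubic[OF m1 bin C])
      show "(m + 1) * (C + 2) \<le> n" using n by simp
      show "Phi x ^ n \<ge> 0" using Phi_pos[of x] x by simp
      fix k assume k: "k \<le> n" "graded_words m w k n \<noteq> {}"
      then obtain pat where pat: "pat \<in> nonzero_words m w (n - 1)" "count_b pat = n - k \<or> count_b pat + 1 = n - k"
        unfolding graded_words_def by auto
      have "real (count_b pat) + 1 \<le> x * real n" using N0 n pat(1) by simp
      then have "real (n - k) \<le> x * real n" using pat(2) by auto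
      then have "real (n choose (n - k)) \<le> Phi x ^ n" by (rule binomial_le_Phi_power[OF x(1,2)])
      then show "real (n choose k) \<le> Phi x ^ n" using binomial_symmetric[OF k(1)] by simp
    qed
  qed
qed

lemma cgr_eventually_le_power2:
  assumes m1: "m \<ge> 1" and bin: "binary_word w" and C: "\<And>n. card (factors w n) \<le> n + 1 + C"
  shows "\<exists>n0. \<forall>n\<ge>n0. real (cgr (F :: 'a::field itself) m w n) \<le> 2 * real n ^ 3 * 2 ^ n"
proof (intro exI[of _ "(m + 1) * (C + 2)"] allI impI)
  fix n assume "(m + 1) * (C + 2) \<le> n"
  then show "real (cgr F m w n) \<le> 2 * real n ^ 3 * 2 ^ n"
  proof (rule cgr_le_cubic[OF m1 bin C])
    show "real (n choose k) \<le> 2 ^ n" for k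
      using binomial_le_pow2[of n k] by (metis of_nat_le_iff of_nat_numeral of_nat_power)
  qed simp
qed

theorem lemma3:
  fixes F :: "'a::field_char_0 itself"
    and m :: nat and w :: "nat \<Rightarrow> nat" and \<alpha> \<beta> :: real
  assumes "m \<ge> 2"
    and "binary_word w"
    and "periodic_word w \<or> sturmian_word w"
    and "has_slope w \<alpha>"
    and "\<beta> = 1 / (real m + \<alpha>)"
  shows "(\<forall>\<epsilon>::real. 0 < \<epsilon> \<and> \<epsilon> \<le> 1/2 - \<beta> \<longrightarrow>
           (\<exists>n0. \<forall>n\<ge>n0. real (cgr F m w n) \<le> 2 * real n ^ 3 * Phi (\<beta> + \<epsilon>) ^ n))
       \<and> limsup (\<lambda>n. ereal (root n (real (cgr F m w n)))) \<le> ereal (Phi \<beta>)"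
proof -
  have m1: "m \<ge> 1" using assms(1) by simp
  have "0 \<le> \<alpha>" "\<alpha> \<le> 1" using slope_between_0_1[OF assms(2,4)] by auto
  then have "real m + \<alpha> \<ge> 2" using assms(1) by simp
  then have \<beta>: "0 < \<beta>" "\<beta> \<le> 1/2" "1 / \<beta> = real m + \<alpha>"
    using assms(5) by (simp_all add: divide_le_eq)
  obtain C where C: "\<And>n. card (factors w n) \<le> n + 1 + C" using factors_linear_bound[OF assms(3)] by blast
  note UL = uniform_lower_slope_if_periodic_or_sturmian[OF assms(2-4)]
  have bound: "\<exists>n0. \<forall>n\<ge>n0. real (cgr F m w n) \<le> 2 * real n ^ 3 * Phi (\<beta> + \<epsilon>) ^ n"
    if "0 < \<epsilon>" "\<epsilon> \<le> 1/2 - \<beta>" for \<epsilon>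
  proof (rule cgr_eventually_le_Phi_power[OF m1 assms(2) C UL])
    show "0 < \<beta> + \<epsilon>" "\<beta> + \<epsilon> \<le> 1/2" using that \<beta> by simp_all
    show "1 / (\<beta> + \<epsilon>) < real m + \<alpha>" using that \<beta> by (simp add: frac_less2 flip: \<beta>(3))
  qed
  moreover have "limsup (\<lambda>n. ereal (root n (real (cgr F m w n)))) \<le> ereal (Phi \<beta>)"
  proof (cases "\<beta> < 1/2")
    case True
    then show ?thesis using limsup_root_le_Phi[OF \<beta>(1) True] bound by blast
  next
    case False
    then have "\<beta> = 1/2" using \<beta>(2) by simp
    then have "Phi \<beta> = 2" using Phi_half by (simp only:)
    then show ?thesis using limsup_root_le[OF _ cgr_eventually_le_power2[OF m1 assms(2) C]] by simp
  qed
  ultimately show ?thesis by blast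
qed

end
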